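(* Consider ${\sf BubbleRank}$ (defined below) run for $n$ steps with parameter $\delta\in(0,1)$ in a stochastic click bandit satisfying A1–A5 with $\alpha(1)>\dots>\alpha(K)>0$. Let $S_1=\{(i,j)\in[K]^2:i<j\}$, $S_2=\{(i,j)\in[K]^2:i>j\}$, $$\mathcal{E}_{t,1}=\Big\{\forall(i,j)\in S_1:\ \frac{\alpha(i)-\alpha(j)}{\alpha(i)+\alpha(j)}\mathbf{n}_t(i,j)-2\sqrt{\mathbf{n}_t(i,j)\log(1/\delta)}\le\mathbf{s}_t(i,j)\Big\},$$ $$\mathcal{E}_{t,2}=\Big\{\forall(i,j)\in S_2:\ \mathbf{s}_t(i,j)\le2\sqrt{\mathbf{n}_t(i,j)\log(1/\delta)}\Big\},$$ $\mathcal{E}=\bigcap_{t\in[n]}(\mathcal{E}_{t,1}\cap\mathcal{E}_{t,2})$, and $\overline{\mathcal{E}}$ its complement. Then $\mathbb{P}(\overline{\mathcal{E}})\le\delta^{1/2}K^2n$.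
   Context: Model. Items $[K]$; a list $\mathcal{R}$ orders all $K$ items, $\mathcal{R}(k)$ is the item at position $k$, $\mathcal{R}^{-1}(i)$ the position of $i$; $\Pi_K$ the set of lists. At time $t$, $(\mathbf{A}_t,\mathbf{X}_t)\in\{0,1\}^K\times\{0,1\}^{\Pi_K\times[K]}$ is drawn i.i.d. from a product distribution; the learner displays $\mathbf{R}_t$ and observes $\mathbf{c}_t(k)=\mathbf{X}_t(\mathbf{R}_t,k)\mathbf{A}_t(\mathbf{R}_t(k))$. $\alpha=\mathbb{E}[\mathbf{A}_t]$, $\chi=\mathbb{E}[\mathbf{X}_t]$, $r(\mathcal{R},\alpha,\chi)=\sum_k\chi(\mathcal{R},k)\alpha(\mathcal{R}(k))$, $\mathcal{R}^*=(1,\dots,K)$. Assumptions for all lists $\mathcal{R},\mathcal{R}'$ and positions $k<\ell$: (A1) $r(\mathcal{R},\alpha,\chi)\le r(\mathcal{R}^*,\alpha,\chi)$; (A2) $\{\mathcal{R}(1..k-1)\}=\{\mathcal{R}'(1..k-1)\}\Rightarrow\chi(\mathcal{R},k)=\chi(\mathcal{R}',k)$; (A3) $\chi(\mathcal{R},k)\ge\chi(\mathcal{R},\ell)$; (A4) if $\mathcal{R},\mathcal{R}'$ differ only by exchanging items at positions $k,\ell$, then $\alpha(\mathcal{R}(k))\le\alpha(\mathcal{R}(\ell))\iff\chi(\mathcal{R},\ell)\ge\chi(\mathcal{R}',\ell)$; (A5) $\chi(\mathcal{R},k)\ge\chi(\mathcal{R}^*,k)$. Algorithm ${\sf BubbleRank}$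 (initial list $\mathcal{R}_0$): $\mathbf{s}_0\equiv\mathbf{n}_0\equiv0$, $\bar{\mathbf{R}}_1=\mathcal{R}_0$. For $t=1,\dots,n$: $h=t\bmod2$, $\mathbf{R}_t\leftarrow\bar{\mathbf{R}}_t$; for $k=1,\dots,\lfloor(K-h)/2\rfloor$ with $i=\mathbf{R}_t(2k-1+h)$, $j=\mathbf{R}_t(2k+h)$: if $\mathbf{s}_{t-1}(i,j)\le2\sqrt{\mathbf{n}_{t-1}(i,j)\log(1/\delta)}$ exchange these two positions with probability $1/2$. Display $\mathbf{R}_t$, observe $\mathbf{c}_t$. $\mathbf{s}_t=\mathbf{s}_{t-1}$, $\mathbf{n}_t=\mathbf{n}_{t-1}$; for each such $k$ with $i=\mathbf{R}_t(2k-1+h)$, $j=\mathbf{R}_t(2k+h)$: if $|\mathbf{c}_t(2k-1+h)-\mathbf{c}_t(2k+h)|=1$, add $\mathbf{c}_t(2k-1+h)-\mathbf{c}_t(2k+h)$ to $\mathbf{s}_t(i,j)$, its negative to $\mathbf{s}_t(j,i)$, and $1$ to $\mathbf{n}_t(i,j),\mathbf{n}_t(j,i)$. Then $\bar{\mathbf{R}}_{t+1}=\bar{\mathbf{R}}_t$; for $k=1,\dots,K-1$ in order with $i=\bar{\mathbf{R}}_{t+1}(k)$, $j=\bar{\mathbf{R}}_{t+1}(k+1)$: if $\mathbf{s}_t(j,i)>2\sqrt{\mathbf{n}_t(j,i)\log(1/\delta)}$ exchange positions $k,k+1$ of $\bar{\mathbf{R}}_{t+1}$. *)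

theory Defs
  imports "HOL-Probability.Probability"
begin

text \<open>Conventions: items are 0,...,K-1 (item i here is item i+1 of the paper),
positions are 0-indexed (position k here is position k+1 of the paper).
A list is a Isabelle list R with distinct entries and set {0..<K}; R ! k is the
item at position k.  The ideal list is [0..<K].\<close>

definition is_list :: "nat \<Rightarrow> nat list \<Rightarrow> bool" where
  "is_list K R \<longleftrightarrow> distinct R \<and> set R = {0..<K}"

text \<open>Environment: A_t has independent Bernoulli(alpha i) coordinates, X_t is drawn
from an arbitrary distribution PX over 0/1-valued functions on lists x positions,
independent of A_t (product distribution).\<close>

definition PA :: "nat \<Rightarrow> (nat \<Rightarrow> real) \<Rightarrow> (nat \<Rightarrow> bool) pmf" where
  "PA K \<alpha> = Pi_pmf {0..<K} False (\<lambda>i. bernoulli_pmf (\<alpha> i))"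

definition env :: "nat \<Rightarrow> (nat \<Rightarrow> real) \<Rightarrow> (nat list \<Rightarrow> nat \<Rightarrow> bool) pmf
    \<Rightarrow> ((nat \<Rightarrow> bool) \<times> (nat list \<Rightarrow> nat \<Rightarrow> bool)) pmf" where
  "env K \<alpha> PX = pair_pmf (PA K \<alpha>) PX"

definition chi :: "(nat list \<Rightarrow> nat \<Rightarrow> bool) pmf \<Rightarrow> nat list \<Rightarrow> nat \<Rightarrow> real" where
  "chi PX R k = measure_pmf.prob PX {X. X R k}"

definition rew :: "nat \<Rightarrow> (nat \<Rightarrow> real) \<Rightarrow> (nat list \<Rightarrow> nat \<Rightarrow> bool) pmf \<Rightarrow> nat list \<Rightarrow> real" where
  "rew K \<alpha> PX R = (\<Sum>k<K. chi PX R k * \<alpha> (R ! k))"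

definition swap_pos :: "nat \<Rightarrow> nat \<Rightarrow> 'a list \<Rightarrow> 'a list" where
  "swap_pos k l R = R[k := R ! l, l := R ! k]"

definition assumptions_A1_A5 :: "nat \<Rightarrow> (nat \<Rightarrow> real) \<Rightarrow> (nat list \<Rightarrow> nat \<Rightarrow> bool) pmf \<Rightarrow> bool" where
  "assumptions_A1_A5 K \<alpha> PX \<longleftrightarrow>
     (\<forall>R. is_list K R \<longrightarrow> rew K \<alpha> PX R \<le> rew K \<alpha> PX [0..<K]) \<and>
     (\<forall>R R' k. is_list K R \<longrightarrow> is_list K R' \<longrightarrow> k < K \<longrightarrow>
        set (take k R) = set (take k R') \<longrightarrow> chi PX R k = chi PX R' k) \<and>
     (\<forall>R k l. is_list K R \<longrightarrow> k < l \<longrightarrow> l < K \<longrightarrow> chi PX R k \<ge> chi PX R l) \<and>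
     (\<forall>R k l. is_list K R \<longrightarrow> k < l \<longrightarrow> l < K \<longrightarrow>
        (\<alpha> (R ! k) \<le> \<alpha> (R ! l) \<longleftrightarrow> chi PX R l \<ge> chi PX (swap_pos k l R) l)) \<and>
     (\<forall>R k. is_list K R \<longrightarrow> k < K \<longrightarrow> chi PX R k \<ge> chi PX [0..<K] k)"

definition thr :: "real \<Rightarrow> nat \<Rightarrow> real" where
  "thr \<delta> m = 2 * sqrt (real m * ln (1 / \<delta>))"

type_synonym stats = "(nat \<Rightarrow> nat \<Rightarrow> int) \<times> (nat \<Rightarrow> nat \<Rightarrow> nat)"

text \<open>State after step t: (bar R_{t+1}, s_t, n_t).\<close>
type_synonym state = "nat list \<times> (nat \<Rightarrow> nat \<Rightarrow> int) \<times> (nat \<Rightarrow> nat \<Rightarrow> nat)"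

fun rand_pairs :: "real \<Rightarrow> nat \<Rightarrow> (nat \<Rightarrow> nat \<Rightarrow> int) \<Rightarrow> (nat \<Rightarrow> nat \<Rightarrow> nat)
    \<Rightarrow> nat list \<Rightarrow> nat \<Rightarrow> nat list pmf" where
  "rand_pairs \<delta> h s n R 0 = return_pmf R"
| "rand_pairs \<delta> h s n R (Suc m) =
     bind_pmf (rand_pairs \<delta> h s n R m) (\<lambda>R'.
       let p = 2 * m + h; i = R' ! p; j = R' ! (p + 1) in
       if real_of_int (s i j) \<le> thr \<delta> (n i j)
       then map_pmf (\<lambda>b. if b then swap_pos p (p + 1) R' else R') (bernoulli_pmf (1/2))
       else return_pmf R')"

definition upd_pair :: "nat \<Rightarrow> nat list \<Rightarrow> (nat \<Rightarrow> bool) \<Rightarrow> nat \<Rightarrow> stats \<Rightarrow> stats" where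
  "upd_pair h R c m sn =
     (let p = 2 * m + h; i = R ! p; j = R ! (p + 1); (s, n) = sn in
      if c p \<noteq> c (p + 1) then
        (let d = (if c p then 1 else -1) :: int in
         (s(i := (s i)(j := s i j + d), j := (s j)(i := s j i - d)),
          n(i := (n i)(j := n i j + 1), j := (n j)(i := n j i + 1))))
      else (s, n))"

definition upd_stats :: "nat \<Rightarrow> nat \<Rightarrow> nat list \<Rightarrow> (nat \<Rightarrow> bool) \<Rightarrow> stats \<Rightarrow> stats" where
  "upd_stats K h R c sn = fold (upd_pair h R c) [0..<(K - h) div 2] sn"

definition upd_bar :: "real \<Rightarrow> nat \<Rightarrow> stats \<Rightarrow> nat list \<Rightarrow> nat list" where
  "upd_bar \<delta> K sn Rb =
     fold (\<lambda>k R. let i = R ! k; j = R ! (k + 1) in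
                  if real_of_int (fst sn j i) > thr \<delta> (snd sn j i) then swap_pos k (k + 1) R else R)
          [0..<K - 1] Rb"

definition br_step :: "nat \<Rightarrow> real \<Rightarrow> ((nat \<Rightarrow> bool) \<times> (nat list \<Rightarrow> nat \<Rightarrow> bool)) pmf
    \<Rightarrow> nat \<Rightarrow> state \<Rightarrow> state pmf" where
  "br_step K \<delta> E t st =
     (case st of (Rb, s, n) \<Rightarrow>
       let h = t mod 2 in
       bind_pmf (rand_pairs \<delta> h s n Rb ((K - h) div 2)) (\<lambda>R.
       map_pmf (\<lambda>(A, X).
         let c = (\<lambda>k. X R k \<and> A (R ! k));
             sn' = upd_stats K h R c (s, n)
         in (upd_bar \<delta> K sn' Rb, sn')) E))"

definition init_state :: "nat list \<Rightarrow> state" where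
  "init_state R0 = (R0, (\<lambda>_ _. 0), (\<lambda>_ _. 0))"

text \<open>Distribution of the trajectory: element t-1 of the list is the state after step t.\<close>

fun traj :: "nat \<Rightarrow> real \<Rightarrow> ((nat \<Rightarrow> bool) \<times> (nat list \<Rightarrow> nat \<Rightarrow> bool)) pmf
    \<Rightarrow> nat list \<Rightarrow> nat \<Rightarrow> state list pmf" where
  "traj K \<delta> E R0 0 = return_pmf []"
| "traj K \<delta> E R0 (Suc t) =
     bind_pmf (traj K \<delta> E R0 t) (\<lambda>xs.
       map_pmf (\<lambda>st'. xs @ [st'])
         (br_step K \<delta> E (Suc t) (if xs = [] then init_state R0 else last xs)))"

definition event_1 :: "nat \<Rightarrow> real \<Rightarrow> (nat \<Rightarrow> real) \<Rightarrow> state \<Rightarrow> bool" where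
  "event_1 K \<delta> \<alpha> st = (case st of (_, s, n) \<Rightarrow>
     (\<forall>i j. i < j \<and> j < K \<longrightarrow>
        (\<alpha> i - \<alpha> j) / (\<alpha> i + \<alpha> j) * real (n i j) - thr \<delta> (n i j) \<le> real_of_int (s i j)))"

definition event_2 :: "nat \<Rightarrow> real \<Rightarrow> state \<Rightarrow> bool" where
  "event_2 K \<delta> st = (case st of (_, s, n) \<Rightarrow>
     (\<forall>i j. j < i \<and> i < K \<longrightarrow> real_of_int (s i j) \<le> thr \<delta> (n i j)))"

end

(*
  Fix items i < j, so that \<alpha> j \<le> \<alpha> i, and put \<mu> = (\<alpha> i - \<alpha> j) / (\<alpha> i + \<alpha> j).  In every step
  s(i,j) changes by some D in {-1, 0, 1} and n(i,j) by |D|, and throughout s(j,i) = -s(i,j) and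
  n(j,i) = n(i,j).  While s(j,i) is below its threshold, a slot holding i and j either shows i above
  j and is not randomized, or is swapped with probability 1/2.  In the first case A3, in the second
  A2 and A4 together with the symmetry of the randomization give
  \<alpha> i P(D = -1) \<le> \<alpha> j P(D = 1).  By Hoeffding's lemma,
  exp (l (\<mu> n(i,j) - s(i,j)) - l^2 n(i,j) / 2), stopped when s(j,i) first exceeds its threshold, is
  then a supermartingale, and Markov's inequality with l = sqrt (log (1/\<delta>) / m) bounds by \<delta> the
  probability that the lower confidence bound on s(i,j) fails while n(i,j) = m.  Since
  s(j,i) = -s(i,j), every violation of E_{t,2} is also one of E_{t,1}, so a union bound over pairs,
  times and values of m gives K^2 n^2 \<delta>; this is at most sqrt \<delta> K^2 n unless the latter exceeds 1.
*)

theory Submission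
  imports Defs
begin

section \<open>Lists and adjacent transpositions\<close>

lemma is_list_length: "is_list K R \<Longrightarrow> length R = K"
  unfolding is_list_def by (metis atLeast0LessThan card_lessThan distinct_card)

lemma is_list_nth_less: "is_list K R \<Longrightarrow> k < K \<Longrightarrow> R ! k < K"
  using is_list_length[of K R] by (auto simp: is_list_def dest: nth_mem)

lemma length_swap_pos [simp]: "length (swap_pos k l R) = length R"
  by (simp add: swap_pos_def)

lemma nth_swap_pos:
  "k < length R \<Longrightarrow> l < length R \<Longrightarrow>
   swap_pos k l R ! q = (if q = l then R ! k else if q = k then R ! l else R ! q)"
  by (simp add: swap_pos_def nth_list_update)

lemma is_list_swap_pos: "is_list K R \<Longrightarrow> k < K \<Longrightarrow> l < K \<Longrightarrow> is_list K (swap_pos k l R)"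
  using is_list_length[of K R] by (simp add: is_list_def swap_pos_def distinct_swap set_swap)

lemma swap_pos_swap_pos: "k < length R \<Longrightarrow> l < length R \<Longrightarrow> swap_pos k l (swap_pos k l R) = R"
  by (rule nth_equalityI) (auto simp: nth_swap_pos)

lemma swap_pos_commute:
  assumes "k < length R" "l < length R" "k' < length R" "l' < length R" "{k, l} \<inter> {k', l'} = {}"
  shows "swap_pos k l (swap_pos k' l' R) = swap_pos k' l' (swap_pos k l R)"
  using assms by (intro nth_equalityI) (auto simp: nth_swap_pos)

lemma take_swap_pos: "m \<le> k \<Longrightarrow> m \<le> l \<Longrightarrow> take m (swap_pos k l R) = take m R"
  by (simp add: swap_pos_def)

lemma slots_fit: "(h::nat) \<le> K \<Longrightarrow> 2 * ((K - h) div 2) + h \<le> K"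
  by linarith

definition pair_at :: "nat list \<Rightarrow> nat \<Rightarrow> nat \<Rightarrow> nat \<Rightarrow> bool" where
  "pair_at R p i j \<longleftrightarrow> R ! p = i \<and> R ! (p + 1) = j \<or> R ! p = j \<and> R ! (p + 1) = i"

section \<open>Randomization of undecided slots\<close>

lemma map_Not_bernoulli_half: "map_pmf Not (bernoulli_pmf (1/2)) = bernoulli_pmf (1/2)"
proof -
  have "inj Not" "surj Not" by (auto simp: inj_on_def)
  then show ?thesis by (simp add: bernoulli_pmf_half_conv_pmf_of_set map_pmf_of_set_inj)
qed

abbreviation undecided :: "real \<Rightarrow> (nat \<Rightarrow> nat \<Rightarrow> int) \<Rightarrow> (nat \<Rightarrow> nat \<Rightarrow> nat) \<Rightarrow> nat \<Rightarrow> nat \<Rightarrow> bool"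
  where "undecided \<delta> s n i j \<equiv> real_of_int (s i j) \<le> thr \<delta> (n i j)"

lemma set_pmf_rand_pairs_Suc:
  assumes "R \<in> set_pmf (rand_pairs \<delta> h s n Rb (Suc M))"
  obtains R' where "R' \<in> set_pmf (rand_pairs \<delta> h s n Rb M)"
    and "R = R' \<or> R = swap_pos (2*M+h) (2*M+h+1) R' \<and>
           undecided \<delta> s n (R' ! (2*M+h)) (R' ! (2*M+h+1))"
  using assms by (auto simp: Let_def split: if_splits)

lemma is_list_rand_pairs:
  assumes "is_list K Rb" "2 * M + h \<le> K"
  shows "R \<in> set_pmf (rand_pairs \<delta> h s n Rb M) \<Longrightarrow> is_list K R"
  using assms(2)
proof (induction M arbitrary: R)
  case 0
  then show ?case using assms(1) by simp
next
  case (Suc M)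
  from Suc.prems(1) obtain R' where R': "R' \<in> set_pmf (rand_pairs \<delta> h s n Rb M)"
    and "R = R' \<or> R = swap_pos (2*M+h) (2*M+h+1) R'"
    by (elim set_pmf_rand_pairs_Suc) blast+
  moreover have "is_list K R'" using Suc.IH[OF R'] Suc.prems(2) by simp
  ultimately show ?case using Suc.prems(2) by (auto intro: is_list_swap_pos)
qed

lemma rand_pairs_slots:
  assumes "R \<in> set_pmf (rand_pairs \<delta> h s n Rb M)" "2 * M + h \<le> length Rb"
  shows "length R = length Rb \<and> (\<forall>q \<ge> 2*M+h. R ! q = Rb ! q) \<and>
    (\<forall>m<M. R ! (2*m+h) = Rb ! (2*m+h) \<and> R ! (2*m+h+1) = Rb ! (2*m+h+1) \<or>
            R ! (2*m+h) = Rb ! (2*m+h+1) \<and> R ! (2*m+h+1) = Rb ! (2*m+h) \<and>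
            undecided \<delta> s n (Rb ! (2*m+h)) (Rb ! (2*m+h+1)))"
  using assms
proof (induction M arbitrary: R)
  case 0
  then show ?case by simp
next
  case (Suc M)
  define p where "p = 2 * M + h"
  from Suc.prems(1) obtain R' where R': "R' \<in> set_pmf (rand_pairs \<delta> h s n Rb M)"
    and R: "R = R' \<or> R = swap_pos p (p+1) R' \<and> undecided \<delta> s n (R' ! p) (R' ! (p+1))"
    unfolding p_def by (elim set_pmf_rand_pairs_Suc) blast+
  have IH: "length R' = length Rb" "\<forall>q \<ge> p. R' ! q = Rb ! q"
    "\<forall>m<M. R' ! (2*m+h) = Rb ! (2*m+h) \<and> R' ! (2*m+h+1) = Rb ! (2*m+h+1) \<or>
            R' ! (2*m+h) = Rb ! (2*m+h+1) \<and> R' ! (2*m+h+1) = Rb ! (2*m+h) \<and>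
            undecided \<delta> s n (Rb ! (2*m+h)) (Rb ! (2*m+h+1))"
    using Suc.IH[OF R'] Suc.prems(2) by (simp_all add: p_def)
  have pR': "R' ! p = Rb ! p" "R' ! (p+1) = Rb ! (p+1)" using IH(2) by simp_all
  from R consider (kept) "R = R'"
    | (swapped) "R = swap_pos p (p+1) R'" "undecided \<delta> s n (Rb ! p) (Rb ! (p+1))"
    using pR' by auto
  then show ?case
  proof cases
    case kept
    then show ?thesis using IH pR' by (auto simp: less_Suc_eq p_def)
  next
    case swapped
    have "p + 1 < length R'" using IH(1) Suc.prems(2) by (simp add: p_def)
    then have nth: "R ! q = (if q = p+1 then R' ! p else if q = p then R' ! (p+1) else R' ! q)" for q
      using swapped(1) by (simp add: nth_swap_pos)
    have "\<forall>m<M. 2*m+h+1 < p" by (simp add: p_def)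
    then show ?thesis using IH pR' swapped unfolding nth by (auto simp: less_Suc_eq p_def)
  qed
qed

lemma rand_pairs_pair_at:
  assumes "R \<in> set_pmf (rand_pairs \<delta> h s n Rb M)" "2 * M + h \<le> length Rb" "m < M"
  shows "pair_at R (2*m+h) i j \<longleftrightarrow> pair_at Rb (2*m+h) i j"
  using rand_pairs_slots[OF assms(1,2)] assms(3) unfolding pair_at_def by auto

definition rand_slot :: "real \<Rightarrow> (nat \<Rightarrow> nat \<Rightarrow> int) \<Rightarrow> (nat \<Rightarrow> nat \<Rightarrow> nat) \<Rightarrow> nat
    \<Rightarrow> nat list \<Rightarrow> nat list pmf" where
  "rand_slot \<delta> s n p R =
     (if undecided \<delta> s n (R ! p) (R ! (p + 1))
      then map_pmf (\<lambda>b. if b then swap_pos p (p + 1) R else R) (bernoulli_pmf (1/2))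
      else return_pmf R)"

lemma rand_pairs_Suc:
  "rand_pairs \<delta> h s n Rb (Suc M) = bind_pmf (rand_pairs \<delta> h s n Rb M) (rand_slot \<delta> s n (2 * M + h))"
  by (simp add: rand_slot_def[abs_def] Let_def)

lemma rand_slot_swap_same:
  assumes "p + 1 < length R" "undecided \<delta> s n (R ! p) (R ! (p + 1))"
  shows "map_pmf (swap_pos p (p + 1)) (rand_slot \<delta> s n p R) = rand_slot \<delta> s n p R"
proof -
  define flip where "flip = (\<lambda>b. if b then swap_pos p (p + 1) R else R)"
  have "swap_pos p (p + 1) \<circ> flip = flip \<circ> Not"
    using assms(1) by (auto simp: flip_def swap_pos_swap_pos)
  then have "map_pmf (swap_pos p (p + 1)) (map_pmf flip (bernoulli_pmf (1/2))) =
      map_pmf flip (map_pmf Not (bernoulli_pmf (1/2)))"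
    by (simp only: pmf.map_comp)
  then show ?thesis using assms(2) by (simp add: rand_slot_def flip_def map_Not_bernoulli_half)
qed

lemma rand_slot_swap_other:
  assumes "p + 1 < length R" "q + 1 < p"
  shows "map_pmf (swap_pos q (q + 1)) (rand_slot \<delta> s n p R) =
    rand_slot \<delta> s n p (swap_pos q (q + 1) R)"
proof -
  have "swap_pos q (q + 1) R ! p = R ! p" "swap_pos q (q + 1) R ! (p + 1) = R ! (p + 1)"
    and "swap_pos q (q + 1) (swap_pos p (p + 1) R) = swap_pos p (p + 1) (swap_pos q (q + 1) R)"
    using assms by (auto simp: nth_swap_pos intro: swap_pos_commute)
  then show ?thesis by (simp add: rand_slot_def if_distrib pmf.map_comp o_def cong: if_cong)
qed

lemma rand_pairs_swap_invariant:
  assumes "m < M" "2 * M + h \<le> length Rb"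
    and "undecided \<delta> s n (Rb ! (2*m+h)) (Rb ! (2*m+h+1))"
  shows "map_pmf (swap_pos (2*m+h) (2*m+h+1)) (rand_pairs \<delta> h s n Rb M) = rand_pairs \<delta> h s n Rb M"
  using assms
proof (induction M)
  case 0
  then show ?case by simp
next
  case (Suc M)
  have slot: "length R' = length Rb \<and> R' ! (2*M+h) = Rb ! (2*M+h) \<and> R' ! (2*M+h+1) = Rb ! (2*M+h+1)"
    if "R' \<in> set_pmf (rand_pairs \<delta> h s n Rb M)" for R'
    using rand_pairs_slots[OF that] Suc.prems(2) by simp
  show ?case
  proof (cases "m = M")
    case True
    have "map_pmf (swap_pos (2*M+h) (2*M+h+1)) (rand_slot \<delta> s n (2*M+h) R') =
        rand_slot \<delta> s n (2*M+h) R'"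
      if "R' \<in> set_pmf (rand_pairs \<delta> h s n Rb M)" for R'
      by (rule rand_slot_swap_same) (use slot[OF that] Suc.prems(2,3) True in auto)
    then show ?thesis unfolding rand_pairs_Suc map_bind_pmf True by (intro bind_pmf_cong) auto
  next
    case False
    then have "m < M" using Suc.prems(1) by simp
    have "map_pmf (swap_pos (2*m+h) (2*m+h+1)) (rand_slot \<delta> s n (2*M+h) R') =
        rand_slot \<delta> s n (2*M+h) (swap_pos (2*m+h) (2*m+h+1) R')"
      if "R' \<in> set_pmf (rand_pairs \<delta> h s n Rb M)" for R'
      by (rule rand_slot_swap_other) (use slot[OF that] Suc.prems(2) \<open>m < M\<close> in auto)
    then have "map_pmf (swap_pos (2*m+h) (2*m+h+1)) (rand_pairs \<delta> h s n Rb (Suc M)) =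
        bind_pmf (map_pmf (swap_pos (2*m+h) (2*m+h+1)) (rand_pairs \<delta> h s n Rb M))
          (rand_slot \<delta> s n (2*M+h))"
      unfolding rand_pairs_Suc map_bind_pmf bind_map_pmf by (intro bind_pmf_cong) auto
    then show ?thesis
      using Suc.IH[OF \<open>m < M\<close>] Suc.prems(2,3) by (simp del: rand_pairs.simps add: rand_pairs_Suc)
  qed
qed

lemma nn_integral_mono_swap_invariant:
  fixes f g :: "'a \<Rightarrow> ennreal"
  assumes "map_pmf \<sigma> M = M" "\<And>x. x \<in> set_pmf M \<Longrightarrow> f x + f (\<sigma> x) \<le> g x + g (\<sigma> x)"
  shows "(\<integral>\<^sup>+x. f x \<partial>M) \<le> (\<integral>\<^sup>+x. g x \<partial>M)"
proof -
  have swap: "(\<integral>\<^sup>+x. u (\<sigma> x) \<partial>M) = (\<integral>\<^sup>+x. u x \<partial>M)" for u :: "'a \<Rightarrow> ennreal"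
    by (metis assms(1) nn_integral_map_pmf)
  have "2 * (\<integral>\<^sup>+x. f x \<partial>M) = (\<integral>\<^sup>+x. f x + f (\<sigma> x) \<partial>M)"
    by (simp add: nn_integral_add swap mult_2)
  also have "\<dots> \<le> (\<integral>\<^sup>+x. g x + g (\<sigma> x) \<partial>M)"
    by (intro nn_integral_mono_AE AE_pmfI assms(2))
  also have "\<dots> = 2 * (\<integral>\<^sup>+x. g x \<partial>M)"
    by (simp add: nn_integral_add swap mult_2)
  finally show ?thesis by (simp add: ennreal_mult_le_mult_iff)
qed

section \<open>Update of the statistics\<close>

definition click_diff :: "(nat \<Rightarrow> bool) \<Rightarrow> nat \<Rightarrow> int" where
  "click_diff c p = of_bool (c p) - of_bool (c (p + 1))"

definition slot_incr :: "nat \<Rightarrow> nat list \<Rightarrow> (nat \<Rightarrow> bool) \<Rightarrow> nat \<Rightarrow> nat \<Rightarrow> nat \<Rightarrow> int" where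
  "slot_incr h R c i j m =
     (let p = 2 * m + h in
      if R ! p = i \<and> R ! (p + 1) = j then click_diff c p
      else if R ! p = j \<and> R ! (p + 1) = i then - click_diff c p else 0)"

definition round_incr :: "nat \<Rightarrow> nat \<Rightarrow> nat list \<Rightarrow> (nat \<Rightarrow> bool) \<Rightarrow> nat \<Rightarrow> nat \<Rightarrow> int" where
  "round_incr M h R c i j = (\<Sum>m<M. slot_incr h R c i j m)"

lemma slot_incr_range: "slot_incr h R c i j m \<in> {-1, 0, 1}"
  by (simp add: slot_incr_def click_diff_def Let_def)

lemma slot_incr_nonzero:
  "slot_incr h R c i j m \<noteq> 0 \<Longrightarrow> R ! (2*m+h) = i \<or> R ! (2*m+h+1) = i"
  by (auto simp: slot_incr_def Let_def split: if_splits)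

lemma slot_incr_flip:
  assumes "i \<noteq> j"
  shows "slot_incr h R c j i m = - slot_incr h R c i j m"
proof -
  define p where "p = 2 * m + h"
  consider "R ! p = i \<and> R ! (p + 1) = j" | "R ! p = j \<and> R ! (p + 1) = i"
    | "\<not> (R ! p = i \<and> R ! (p + 1) = j)" "\<not> (R ! p = j \<and> R ! (p + 1) = i)"
    by blast
  then show ?thesis
    using assms unfolding slot_incr_def Let_def p_def[symmetric] by cases auto
qed

lemma upd_pair_entry:
  assumes "i \<noteq> j"
  shows "fst (upd_pair h R c m (s, n)) i j = s i j + slot_incr h R c i j m \<and>
         fst (upd_pair h R c m (s, n)) j i = s j i - slot_incr h R c i j m \<and>
         snd (upd_pair h R c m (s, n)) i j = n i j + nat \<bar>slot_incr h R c i j m\<bar> \<and>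
         snd (upd_pair h R c m (s, n)) j i = n j i + nat \<bar>slot_incr h R c i j m\<bar>"
  using assms by (auto simp: upd_pair_def slot_incr_def click_diff_def Let_def)

lemma fold_upd_pair_entry:
  assumes "i \<noteq> j"
  shows "fst (fold (upd_pair h R c) [0..<M] (s, n)) i j = s i j + round_incr M h R c i j \<and>
         fst (fold (upd_pair h R c) [0..<M] (s, n)) j i = s j i - round_incr M h R c i j \<and>
         snd (fold (upd_pair h R c) [0..<M] (s, n)) i j = n i j + (\<Sum>m<M. nat \<bar>slot_incr h R c i j m\<bar>) \<and>
         snd (fold (upd_pair h R c) [0..<M] (s, n)) j i = n j i + (\<Sum>m<M. nat \<bar>slot_incr h R c i j m\<bar>)"
proof (induction M)
  case 0
  then show ?case by (simp add: round_incr_def)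
next
  case (Suc M)
  obtain s' n' where sn: "fold (upd_pair h R c) [0..<M] (s, n) = (s', n')" by fastforce
  then show ?case
    using Suc.IH upd_pair_entry[OF assms, of h R c M s' n'] by (simp add: round_incr_def)
qed

lemma slot_unique:
  assumes "distinct R" "2*m+h+1 < length R" "2*m'+h+1 < length R"
    and "R ! (2*m+h) = i \<or> R ! (2*m+h+1) = i" "R ! (2*m'+h) = i \<or> R ! (2*m'+h+1) = i"
  shows "m = m'"
proof -
  have inj: "a = b" if "a < length R" "b < length R" "R ! a = R ! b" for a b
    using that assms(1) nth_eq_iff_index_eq by blast
  from assms(4) obtain a where a: "a = 2*m+h \<or> a = 2*m+h+1" "R ! a = i" by blast
  from assms(5) obtain a' where a': "a' = 2*m'+h \<or> a' = 2*m'+h+1" "R ! a' = i" by blast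
  have "a = a'" using inj[of a a'] a a' assms(2,3) by auto
  with a(1) a'(1) show ?thesis by presburger
qed

lemma round_incr_slot:
  assumes "distinct R" "2*M+h \<le> length R" "m0 < M" "R ! (2*m0+h) = i \<or> R ! (2*m0+h+1) = i"
  shows "round_incr M h R c i j = slot_incr h R c i j m0"
    and "(\<Sum>m<M. nat \<bar>slot_incr h R c i j m\<bar>) = nat \<bar>slot_incr h R c i j m0\<bar>"
proof -
  have zero: "slot_incr h R c i j m = 0" if "m < M" "m \<noteq> m0" for m
    using slot_unique[OF assms(1) _ _ slot_incr_nonzero assms(4), of m] that assms(2,3) by force
  show "round_incr M h R c i j = slot_incr h R c i j m0"
    unfolding round_incr_def using assms(3) zero
    by (subst sum.remove[of _ m0]) (auto intro!: sum.neutral)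
  show "(\<Sum>m<M. nat \<bar>slot_incr h R c i j m\<bar>) = nat \<bar>slot_incr h R c i j m0\<bar>"
    using assms(3) zero by (subst sum.remove[of _ m0]) (auto intro!: sum.neutral)
qed

lemma round_incr_no_slot:
  assumes "\<And>m. m < M \<Longrightarrow> \<not> pair_at R (2*m+h) i j"
  shows "round_incr M h R c i j = 0" and "(\<Sum>m<M. nat \<bar>slot_incr h R c i j m\<bar>) = 0"
proof -
  have "slot_incr h R c i j m = 0" if "m < M" for m
    using assms[OF that] unfolding slot_incr_def pair_at_def Let_def by auto
  then show "round_incr M h R c i j = 0" "(\<Sum>m<M. nat \<bar>slot_incr h R c i j m\<bar>) = 0"
    by (simp_all add: round_incr_def)
qed

lemma round_incr_range:
  assumes "distinct R" "2*M+h \<le> length R"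
  shows "round_incr M h R c i j \<in> {-1, 0, 1}"
    and "(\<Sum>m<M. nat \<bar>slot_incr h R c i j m\<bar>) = nat \<bar>round_incr M h R c i j\<bar>"
proof -
  have "round_incr M h R c i j \<in> {-1, 0, 1} \<and>
      (\<Sum>m<M. nat \<bar>slot_incr h R c i j m\<bar>) = nat \<bar>round_incr M h R c i j\<bar>"
  proof (cases "\<exists>m0<M. R ! (2*m0+h) = i \<or> R ! (2*m0+h+1) = i")
    case True
    then obtain m0 where "m0 < M" "R ! (2*m0+h) = i \<or> R ! (2*m0+h+1) = i" by blast
    then show ?thesis using round_incr_slot[OF assms] slot_incr_range by simp
  next
    case False
    then show ?thesis using round_incr_no_slot[of M R h i j c] by (auto simp: pair_at_def)
  qed
  then show "round_incr M h R c i j \<in> {-1, 0, 1}"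
    and "(\<Sum>m<M. nat \<bar>slot_incr h R c i j m\<bar>) = nat \<bar>round_incr M h R c i j\<bar>" by simp_all
qed

definition clicks :: "nat list \<Rightarrow> (nat \<Rightarrow> bool) \<times> (nat list \<Rightarrow> nat \<Rightarrow> bool) \<Rightarrow> nat \<Rightarrow> bool" where
  "clicks R AX k \<longleftrightarrow> snd AX R k \<and> fst AX (R ! k)"

definition step_outcome :: "nat \<Rightarrow> real \<Rightarrow> nat \<Rightarrow> nat list \<Rightarrow> (nat \<Rightarrow> nat \<Rightarrow> int)
    \<Rightarrow> (nat \<Rightarrow> nat \<Rightarrow> nat) \<Rightarrow> nat list \<Rightarrow> (nat \<Rightarrow> bool) \<times> (nat list \<Rightarrow> nat \<Rightarrow> bool) \<Rightarrow> state" where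
  "step_outcome K \<delta> h Rb s n R AX =
     (let sn' = upd_stats K h R (clicks R AX) (s, n) in (upd_bar \<delta> K sn' Rb, sn'))"

lemma br_step_eq:
  "br_step K \<delta> E t (Rb, s, n) =
   bind_pmf (rand_pairs \<delta> (t mod 2) s n Rb ((K - t mod 2) div 2))
     (\<lambda>R. map_pmf (step_outcome K \<delta> (t mod 2) Rb s n R) E)"
  unfolding br_step_def step_outcome_def clicks_def by (simp add: Let_def case_prod_unfold)

definition step_incr :: "nat \<Rightarrow> nat \<Rightarrow> nat list \<Rightarrow> (nat \<Rightarrow> bool) \<times> (nat list \<Rightarrow> nat \<Rightarrow> bool)
    \<Rightarrow> nat \<Rightarrow> nat \<Rightarrow> int" where
  "step_incr K h R AX i j = round_incr ((K - h) div 2) h R (clicks R AX) i j"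

lemma step_incr_flip:
  assumes "i \<noteq> j"
  shows "step_incr K h R AX j i = - step_incr K h R AX i j"
proof -
  have "(\<Sum>m<M. slot_incr h R c j i m) = (\<Sum>m<M. - slot_incr h R c i j m)" for M c
    using slot_incr_flip[OF assms] by simp
  then show ?thesis by (simp add: step_incr_def round_incr_def sum_negf)
qed

lemma step_outcome_stats:
  assumes "i \<noteq> j" "distinct R" "2 * ((K - h) div 2) + h \<le> length R"
  shows "fst (snd (step_outcome K \<delta> h Rb s n R AX)) i j = s i j + step_incr K h R AX i j \<and>
         fst (snd (step_outcome K \<delta> h Rb s n R AX)) j i = s j i - step_incr K h R AX i j \<and>
         snd (snd (step_outcome K \<delta> h Rb s n R AX)) i j = n i j + nat \<bar>step_incr K h R AX i j\<bar> \<and>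
         snd (snd (step_outcome K \<delta> h Rb s n R AX)) j i = n j i + nat \<bar>step_incr K h R AX i j\<bar>"
  using fold_upd_pair_entry[OF assms(1)] round_incr_range(2)[OF assms(2,3)]
  unfolding step_outcome_def upd_stats_def step_incr_def Let_def by simp

lemma is_list_fold_adjacent_swaps:
  "(\<forall>k\<in>set ks. k + 1 < K) \<Longrightarrow> is_list K R \<Longrightarrow>
   is_list K (fold (\<lambda>k R. if P k R then swap_pos k (k + 1) R else R) ks R)"
  by (induction ks arbitrary: R) (simp_all add: is_list_swap_pos)

lemma is_list_upd_bar: "is_list K Rb \<Longrightarrow> is_list K (upd_bar \<delta> K sn Rb)"
  unfolding upd_bar_def Let_def by (rule is_list_fold_adjacent_swaps) auto

lemma is_list_br_step:
  "is_list K Rb \<Longrightarrow> st' \<in> set_pmf (br_step K \<delta> E t (Rb, s, n)) \<Longrightarrow> is_list K (fst st')"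
  by (auto simp: br_step_eq step_outcome_def Let_def intro: is_list_upd_bar)

lemma br_step_stats:
  assumes "is_list K Rb" "i \<noteq> j" "i < K"
    and "st' \<in> set_pmf (br_step K \<delta> E t (Rb, s, n))"
  obtains d :: int where "d \<in> {-1, 0, 1}"
    "fst (snd st') i j = s i j + d" "fst (snd st') j i = s j i - d"
    "snd (snd st') i j = n i j + nat \<bar>d\<bar>" "snd (snd st') j i = n j i + nat \<bar>d\<bar>"
proof -
  define h where "h = t mod 2"
  define M where "M = (K - h) div 2"
  from assms(4) obtain R AX where R: "R \<in> set_pmf (rand_pairs \<delta> h s n Rb M)"
    and st': "st' = step_outcome K \<delta> h Rb s n R AX"
    unfolding br_step_eq h_def M_def by auto
  have fit: "2 * M + h \<le> K" unfolding M_def using assms(3) by (intro slots_fit) (simp add: h_def)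
  have "is_list K R" using is_list_rand_pairs[OF assms(1) fit R] .
  then have R_props: "distinct R" "length R = K" by (auto simp: is_list_def is_list_length)
  show ?thesis
  proof (rule that[of "step_incr K h R AX i j"])
    show "step_incr K h R AX i j \<in> {-1, 0, 1}"
      unfolding step_incr_def using round_incr_range(1) R_props fit by (simp add: M_def)
  qed (use step_outcome_stats[OF assms(2) R_props(1)] R_props fit in \<open>simp_all add: st' M_def\<close>)
qed

section \<open>Drift of the statistic of a pair\<close>

lemma assumption_A2:
  "assumptions_A1_A5 K \<alpha> PX \<Longrightarrow> is_list K R \<Longrightarrow> is_list K R' \<Longrightarrow> k < K \<Longrightarrow>
   set (take k R) = set (take k R') \<Longrightarrow> chi PX R k = chi PX R' k"
  unfolding assumptions_A1_A5_def by blast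

lemma assumption_A3:
  "assumptions_A1_A5 K \<alpha> PX \<Longrightarrow> is_list K R \<Longrightarrow> k < l \<Longrightarrow> l < K \<Longrightarrow> chi PX R l \<le> chi PX R k"
  unfolding assumptions_A1_A5_def by blast

lemma assumption_A4:
  "assumptions_A1_A5 K \<alpha> PX \<Longrightarrow> is_list K R \<Longrightarrow> k < l \<Longrightarrow> l < K \<Longrightarrow>
   \<alpha> (R ! k) \<le> \<alpha> (R ! l) \<Longrightarrow> chi PX (swap_pos k l R) l \<le> chi PX R l"
  unfolding assumptions_A1_A5_def by blast

lemma measure_pair_pmf_times:
  "measure_pmf.prob (pair_pmf M N) (A \<times> B) = measure_pmf.prob M A * measure_pmf.prob N B"
proof -
  have "measure_pmf.prob (pair_pmf M N) (A \<times> B) =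
        measure_pmf.prob (pair_pmf M N) ((A \<inter> set_pmf M) \<times> (B \<inter> set_pmf N))"
    by (subst measure_Int_set_pmf[symmetric]) (auto intro: arg_cong2[where f = measure])
  also have "\<dots> = measure_pmf.prob M (A \<inter> set_pmf M) * measure_pmf.prob N (B \<inter> set_pmf N)"
    by (rule measure_pmf_prob_product) (auto intro: countable_subset)
  finally show ?thesis by (simp add: measure_Int_set_pmf)
qed

lemma measure_PA_all:
  assumes "S \<subseteq> {0..<K}" "\<And>i. i \<in> S \<Longrightarrow> 0 \<le> \<alpha> i \<and> \<alpha> i \<le> 1"
  shows "measure_pmf.prob (PA K \<alpha>) {A. \<forall>z\<in>S. A z} = (\<Prod>z\<in>S. \<alpha> z)"
proof -
  define B where "B = (\<lambda>z. if z \<in> S then {True} else (UNIV :: bool set))"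
  have "{A. \<forall>z\<in>S. A z} = Pi {0..<K} B"
    using assms(1) by (auto simp: B_def Pi_def)
  then have "measure_pmf.prob (PA K \<alpha>) {A. \<forall>z\<in>S. A z} =
      (\<Prod>z\<in>{0..<K}. measure_pmf.prob (bernoulli_pmf (\<alpha> z)) (B z))"
    unfolding PA_def by (simp add: measure_Pi_pmf_Pi)
  also have "\<dots> = (\<Prod>z\<in>{0..<K}. if z \<in> S then \<alpha> z else 1)"
    using assms(2) by (intro prod.cong) (auto simp: B_def measure_pmf_single)
  also have "\<dots> = (\<Prod>z\<in>S. \<alpha> z)"
  proof -
    have "{0..<K} \<inter> {z. z \<in> S} = S" using assms(1) by blast
    then show ?thesis by (simp add: prod.If_cases)
  qed
  finally show ?thesis .
qed

definition incr_prob :: "nat \<Rightarrow> (nat \<Rightarrow> real) \<Rightarrow> (nat list \<Rightarrow> nat \<Rightarrow> bool) pmf \<Rightarrow> nat \<Rightarrow> nat list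
    \<Rightarrow> nat \<Rightarrow> nat \<Rightarrow> int \<Rightarrow> real" where
  "incr_prob K \<alpha> PX h R i j v = measure_pmf.prob (env K \<alpha> PX) {AX. step_incr K h R AX i j = v}"

lemma incr_prob_nonneg: "0 \<le> incr_prob K \<alpha> PX h R i j v"
  by (simp add: incr_prob_def)

lemma incr_prob_flip:
  assumes "i \<noteq> j"
  shows "incr_prob K \<alpha> PX h R j i v = incr_prob K \<alpha> PX h R i j (- v)"
proof -
  have "{AX. step_incr K h R AX j i = v} = {AX. step_incr K h R AX i j = - v}"
    using step_incr_flip[OF assms] by auto
  then show ?thesis by (simp add: incr_prob_def)
qed

lemma incr_prob_adjacent:
  fixes PX :: "(nat list \<Rightarrow> nat \<Rightarrow> bool) pmf"
  assumes "is_list K R" "m0 < (K - h) div 2" "h \<le> K" "p = 2 * m0 + h"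
    and "R ! p = x" "R ! (p + 1) = y" "\<And>i. i < K \<Longrightarrow> 0 \<le> \<alpha> i \<and> \<alpha> i \<le> 1"
  defines "J \<equiv> measure_pmf.prob PX {X. X R p \<and> X R (p + 1)}"
  shows "incr_prob K \<alpha> PX h R x y 1 = \<alpha> x * (chi PX R p - \<alpha> y * J)"
    and "incr_prob K \<alpha> PX h R x y (-1) = \<alpha> y * (chi PX R (p + 1) - \<alpha> x * J)"
proof -
  have fit: "2 * ((K - h) div 2) + h \<le> K" using assms(3) by (rule slots_fit)
  have len: "length R = K" using assms(1) by (rule is_list_length)
  have "p + 1 < K" using assms(2,4) fit by linarith
  then have xy: "x < K" "y < K" "x \<noteq> y"
    using assms(1,5,6) len nth_eq_iff_index_eq[of R p "p + 1"]
    by (auto simp: is_list_def dest: nth_mem)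
  have incr: "step_incr K h R AX x y = click_diff (clicks R AX) p" for AX
    unfolding step_incr_def
    using round_incr_slot(1)[of R "(K - h) div 2" h m0 x] assms(1,2,4,5,6) fit len xy(3)
    by (simp add: is_list_def slot_incr_def)
  have y: "R ! Suc p = y" using assms(6) by simp
  have PA: "measure_pmf.prob (PA K \<alpha>) {A. A x} = \<alpha> x"
    "measure_pmf.prob (PA K \<alpha>) {A. A y} = \<alpha> y"
    "measure_pmf.prob (PA K \<alpha>) {A. A x \<and> A y} = \<alpha> x * \<alpha> y"
    using measure_PA_all[of "{x}" K \<alpha>] measure_PA_all[of "{y}" K \<alpha>]
      measure_PA_all[of "{x, y}" K \<alpha>] xy assms(7) by auto
  have diff: "measure_pmf.prob (env K \<alpha> PX) (S - T) =
      measure_pmf.prob (env K \<alpha> PX) S - measure_pmf.prob (env K \<alpha> PX) T" if "T \<subseteq> S" for S T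
    using that by (simp add: measure_pmf.finite_measure_Diff)
  have plus: "{AX. step_incr K h R AX x y = 1} =
      {A. A x} \<times> {X. X R p} - {A. A x \<and> A y} \<times> {X. X R p \<and> X R (p + 1)}"
    by (auto simp: incr clicks_def click_diff_def assms(5) y)
  show "incr_prob K \<alpha> PX h R x y 1 = \<alpha> x * (chi PX R p - \<alpha> y * J)"
    unfolding incr_prob_def plus
    by (subst diff) (auto simp: env_def measure_pair_pmf_times PA chi_def J_def algebra_simps)
  have minus: "{AX. step_incr K h R AX x y = -1} =
      {A. A y} \<times> {X. X R (p + 1)} - {A. A x \<and> A y} \<times> {X. X R p \<and> X R (p + 1)}"
    by (auto simp: incr clicks_def click_diff_def assms(5) y)
  show "incr_prob K \<alpha> PX h R x y (-1) = \<alpha> y * (chi PX R (p + 1) - \<alpha> x * J)"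
    unfolding incr_prob_def minus
    by (subst diff) (auto simp: env_def measure_pair_pmf_times PA chi_def J_def algebra_simps)
qed

lemma drift_sorted_slot:
  assumes A: "assumptions_A1_A5 K \<alpha> PX" and R: "is_list K R"
    and slot: "m0 < (K - h) div 2" "h \<le> K" "p = 2 * m0 + h" "R ! p = i" "R ! (p + 1) = j"
    and \<alpha>: "\<And>i. i < K \<Longrightarrow> 0 \<le> \<alpha> i \<and> \<alpha> i \<le> 1" "\<alpha> j \<le> \<alpha> i"
  shows "\<alpha> i * incr_prob K \<alpha> PX h R i j (-1) \<le> \<alpha> j * incr_prob K \<alpha> PX h R i j 1"
proof -
  define J where "J = measure_pmf.prob PX {X. X R p \<and> X R (p + 1)}"
  have "p + 1 < K" using slot(1-3) slots_fit[OF slot(2)] by linarith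
  then have "0 \<le> \<alpha> i * \<alpha> j" using R slot(4,5) \<alpha>(1) is_list_nth_less by auto
  moreover have "\<alpha> j * J \<le> \<alpha> i * J" unfolding J_def using \<alpha>(2) by (simp add: mult_right_mono)
  moreover have "chi PX R (p + 1) \<le> chi PX R p" using assumption_A3[OF A R] \<open>p + 1 < K\<close> by simp
  ultimately have "(\<alpha> i * \<alpha> j) * (chi PX R (p + 1) - \<alpha> i * J) \<le> (\<alpha> i * \<alpha> j) * (chi PX R p - \<alpha> j * J)"
    by (intro mult_left_mono) auto
  then show ?thesis
    using incr_prob_adjacent[where \<alpha> = \<alpha> and PX = PX, OF R slot \<alpha>(1)] by (simp add: J_def mult_ac)
qed

lemma drift_swapped_slot:
  assumes A: "assumptions_A1_A5 K \<alpha> PX" and R: "is_list K R"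
    and slot: "m0 < (K - h) div 2" "h \<le> K" "p = 2 * m0 + h" "R ! p = i" "R ! (p + 1) = j"
    and \<alpha>: "\<And>i. i < K \<Longrightarrow> 0 \<le> \<alpha> i \<and> \<alpha> i \<le> 1" "\<alpha> j \<le> \<alpha> i"
  defines "R' \<equiv> swap_pos p (p + 1) R"
  shows "\<alpha> i * (incr_prob K \<alpha> PX h R i j (-1) + incr_prob K \<alpha> PX h R' i j (-1))
       \<le> \<alpha> j * (incr_prob K \<alpha> PX h R i j 1 + incr_prob K \<alpha> PX h R' i j 1)"
proof -
  define J where "J = measure_pmf.prob PX {X. X R p \<and> X R (p + 1)}"
  define J' where "J' = measure_pmf.prob PX {X. X R' p \<and> X R' (p + 1)}"
  have len: "length R = K" using R by (rule is_list_length)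
  have "p + 1 < K" using slot(1-3) slots_fit[OF slot(2)] by linarith
  then have ij: "0 \<le> \<alpha> i" "0 \<le> \<alpha> j" "i \<noteq> j"
    using R slot(4,5) \<alpha>(1) is_list_nth_less len nth_eq_iff_index_eq[of R p "p + 1"]
    by (auto simp: is_list_def)
  have R': "is_list K R'" "R' ! p = j" "R' ! (p + 1) = i"
    using is_list_swap_pos[OF R] \<open>p + 1 < K\<close> slot(4,5) len by (auto simp: R'_def nth_swap_pos)
  have chi_p: "chi PX R' p = chi PX R p"
    using assumption_A2[OF A R'(1) R] \<open>p + 1 < K\<close> by (simp add: R'_def take_swap_pos)
  have "swap_pos p (p + 1) R' = R" using \<open>p + 1 < K\<close> len by (simp add: R'_def swap_pos_swap_pos)
  then have chi_p1: "chi PX R (p + 1) \<le> chi PX R' (p + 1)"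
    using assumption_A4[OF A R'(1), of p "p + 1"] \<open>p + 1 < K\<close> R'(2,3) \<alpha>(2) by simp
  have "\<alpha> j * J \<le> \<alpha> i * J" "\<alpha> j * J' \<le> \<alpha> i * J'"
    using \<alpha>(2) by (simp_all add: J_def J'_def mult_right_mono)
  with chi_p chi_p1 have key: "(\<alpha> i * \<alpha> j) * ((chi PX R (p + 1) - \<alpha> i * J) + (chi PX R' p - \<alpha> i * J'))
      \<le> (\<alpha> i * \<alpha> j) * ((chi PX R p - \<alpha> j * J) + (chi PX R' (p + 1) - \<alpha> j * J'))"
    using ij by (intro mult_left_mono) auto
  have vR: "incr_prob K \<alpha> PX h R i j (-1) = \<alpha> j * (chi PX R (p + 1) - \<alpha> i * J)"
    "incr_prob K \<alpha> PX h R i j 1 = \<alpha> i * (chi PX R p - \<alpha> j * J)"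
    using incr_prob_adjacent[where \<alpha> = \<alpha> and PX = PX, OF R slot \<alpha>(1)] by (simp_all add: J_def)
  have vR': "incr_prob K \<alpha> PX h R' i j (-1) = \<alpha> j * (chi PX R' p - \<alpha> i * J')"
    "incr_prob K \<alpha> PX h R' i j 1 = \<alpha> i * (chi PX R' (p + 1) - \<alpha> j * J')"
    using incr_prob_adjacent[where \<alpha> = \<alpha> and PX = PX, OF R'(1) slot(1-3) R'(2,3) \<alpha>(1)]
      incr_prob_flip[OF ij(3)]
    by (simp_all add: J'_def)
  show ?thesis unfolding vR vR' using key by (simp add: algebra_simps)
qed

lemma drift_pair_slot:
  assumes A: "assumptions_A1_A5 K \<alpha> PX" and R: "is_list K R"
    and slot: "m0 < (K - h) div 2" "h \<le> K" "p = 2 * m0 + h" "pair_at R p i j"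
    and \<alpha>: "\<And>i. i < K \<Longrightarrow> 0 \<le> \<alpha> i \<and> \<alpha> i \<le> 1" "\<alpha> j \<le> \<alpha> i"
  defines "R' \<equiv> swap_pos p (p + 1) R"
  shows "\<alpha> i * (incr_prob K \<alpha> PX h R i j (-1) + incr_prob K \<alpha> PX h R' i j (-1))
       \<le> \<alpha> j * (incr_prob K \<alpha> PX h R i j 1 + incr_prob K \<alpha> PX h R' i j 1)"
proof (cases "R ! p = i")
  case True
  then show ?thesis
    using drift_swapped_slot[OF A R slot(1-3) _ _ \<alpha>] slot(4) by (auto simp: pair_at_def R'_def)
next
  case False
  have len: "length R = K" using R by (rule is_list_length)
  have "p + 1 < K" using slot(1-3) slots_fit[OF slot(2)] by linarith
  then have R': "is_list K R'" "R' ! p = i" "R' ! (p + 1) = j" "swap_pos p (p + 1) R' = R"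
    using is_list_swap_pos[OF R] False slot(4) len
    by (auto simp: R'_def pair_at_def nth_swap_pos swap_pos_swap_pos)
  show ?thesis
    using drift_swapped_slot[OF A R'(1) slot(1-3) R'(2,3) \<alpha>] R'(4) by (simp add: add.commute)
qed

lemma emeasure_br_step_incr:
  assumes "is_list K Rb" "i \<noteq> j" "i < K"
  shows "emeasure (br_step K \<delta> (env K \<alpha> PX) t (Rb, s, n)) {st'. fst (snd st') i j = s i j + v} =
    (\<integral>\<^sup>+R. ennreal (incr_prob K \<alpha> PX (t mod 2) R i j v)
       \<partial>rand_pairs \<delta> (t mod 2) s n Rb ((K - t mod 2) div 2))"
proof -
  define h where "h = t mod 2"
  define M where "M = (K - h) div 2"
  have fit: "2 * M + h \<le> K" unfolding M_def using assms(3) by (intro slots_fit) (simp add: h_def)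
  have "emeasure (br_step K \<delta> (env K \<alpha> PX) t (Rb, s, n)) {st'. fst (snd st') i j = s i j + v} =
    (\<integral>\<^sup>+R. emeasure (env K \<alpha> PX) (step_outcome K \<delta> h Rb s n R -` {st'. fst (snd st') i j = s i j + v})
       \<partial>rand_pairs \<delta> h s n Rb M)"
    by (simp add: br_step_eq h_def M_def)
  also have "\<dots> = (\<integral>\<^sup>+R. ennreal (incr_prob K \<alpha> PX h R i j v) \<partial>rand_pairs \<delta> h s n Rb M)"
  proof (intro nn_integral_cong_AE AE_pmfI)
    fix R assume "R \<in> set_pmf (rand_pairs \<delta> h s n Rb M)"
    then have "is_list K R" by (rule is_list_rand_pairs[OF assms(1) fit])
    then have "distinct R" "length R = K" by (auto simp: is_list_def is_list_length)
    then have "step_outcome K \<delta> h Rb s n R -` {st'. fst (snd st') i j = s i j + v} =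
        {AX. step_incr K h R AX i j = v}"
      using step_outcome_stats[OF assms(2)] fit by (auto simp: M_def)
    then show "emeasure (env K \<alpha> PX)
        (step_outcome K \<delta> h Rb s n R -` {st'. fst (snd st') i j = s i j + v}) =
        ennreal (incr_prob K \<alpha> PX h R i j v)"
      by (simp add: incr_prob_def measure_pmf.emeasure_eq_measure)
  qed
  finally show ?thesis by (simp add: h_def M_def)
qed

(* By the hypothesis on s(j, i), a decided slot shows i above j; an undecided one is randomized
   symmetrically. *)
lemma rand_pairs_drift_slot:
  assumes A: "assumptions_A1_A5 K \<alpha> PX" and \<alpha>: "\<And>i. i < K \<Longrightarrow> 0 \<le> \<alpha> i \<and> \<alpha> i \<le> 1"
    and ij: "\<alpha> j \<le> \<alpha> i" and Rb: "is_list K Rb" and hK: "h \<le> K"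
    and undecided_ji: "undecided \<delta> s n j i"
    and m0: "m0 < (K - h) div 2" "pair_at Rb (2*m0+h) i j"
  defines "rnd \<equiv> rand_pairs \<delta> h s n Rb ((K - h) div 2)"
  shows "(\<integral>\<^sup>+R. ennreal (\<alpha> i * incr_prob K \<alpha> PX h R i j (-1)) \<partial>rnd)
       \<le> (\<integral>\<^sup>+R. ennreal (\<alpha> j * incr_prob K \<alpha> PX h R i j 1) \<partial>rnd)"
proof -
  define p where "p = 2*m0+h"
  have fit: "2 * ((K - h) div 2) + h \<le> K" using hK by (rule slots_fit)
  have len: "length Rb = K" using Rb by (rule is_list_length)
  have R: "is_list K R" "pair_at R p i j" if "R \<in> set_pmf rnd" for R
    using is_list_rand_pairs[OF Rb fit] rand_pairs_pair_at[of R] that fit len m0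
    by (simp_all add: rnd_def p_def)
  have "p + 1 < K" using m0(1) fit by (simp add: p_def)
  then have \<alpha>_nonneg: "0 \<le> \<alpha> i" "0 \<le> \<alpha> j"
    using m0(2) \<alpha> is_list_nth_less[OF Rb] by (auto simp: pair_at_def p_def)
  show ?thesis
  proof (cases "undecided \<delta> s n (Rb ! p) (Rb ! (p+1))")
    case False
    then have "Rb ! p = i" "Rb ! (p+1) = j"
      using m0(2) undecided_ji by (auto simp: pair_at_def p_def)
    then have sorted: "R ! p = i" "R ! (p+1) = j" if "R \<in> set_pmf rnd" for R
      using rand_pairs_slots[OF that[unfolded rnd_def]] m0(1) False fit len
      by (fastforce simp: p_def)+
    show ?thesis
    proof (intro nn_integral_mono_AE AE_pmfI ennreal_leI)
      fix R assume "R \<in> set_pmf rnd"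
      then show "\<alpha> i * incr_prob K \<alpha> PX h R i j (-1) \<le> \<alpha> j * incr_prob K \<alpha> PX h R i j 1"
        using drift_sorted_slot[OF A R(1) m0(1) hK p_def sorted \<alpha> ij] by blast
    qed
  next
    case True
    have "map_pmf (swap_pos p (p+1)) rnd = rnd"
      unfolding rnd_def p_def using rand_pairs_swap_invariant m0(1) fit len True
      by (simp add: p_def)
    then show ?thesis
    proof (rule nn_integral_mono_swap_invariant)
      fix R assume "R \<in> set_pmf rnd"
      then show "ennreal (\<alpha> i * incr_prob K \<alpha> PX h R i j (-1)) +
            ennreal (\<alpha> i * incr_prob K \<alpha> PX h (swap_pos p (p+1) R) i j (-1))
          \<le> ennreal (\<alpha> j * incr_prob K \<alpha> PX h R i j 1) +
            ennreal (\<alpha> j * incr_prob K \<alpha> PX h (swap_pos p (p+1) R) i j 1)"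
        using drift_pair_slot[OF A R(1) m0(1) hK p_def R(2) \<alpha> ij] \<alpha>_nonneg incr_prob_nonneg
        by (simp add: distrib_left ennreal_plus[symmetric] del: ennreal_plus)
    qed
  qed
qed

lemma rand_pairs_drift:
  assumes A: "assumptions_A1_A5 K \<alpha> PX" and \<alpha>: "\<And>i. i < K \<Longrightarrow> 0 \<le> \<alpha> i \<and> \<alpha> i \<le> 1"
    and ij: "\<alpha> j \<le> \<alpha> i" and Rb: "is_list K Rb" and hK: "h \<le> K"
    and undecided_ji: "undecided \<delta> s n j i"
  defines "rnd \<equiv> rand_pairs \<delta> h s n Rb ((K - h) div 2)"
  shows "(\<integral>\<^sup>+R. ennreal (\<alpha> i * incr_prob K \<alpha> PX h R i j (-1)) \<partial>rnd)
       \<le> (\<integral>\<^sup>+R. ennreal (\<alpha> j * incr_prob K \<alpha> PX h R i j 1) \<partial>rnd)"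
proof (cases "\<exists>m0 < (K - h) div 2. pair_at Rb (2*m0+h) i j")
  case True
  then obtain m0 where m0: "m0 < (K - h) div 2" "pair_at Rb (2*m0+h) i j" by blast
  show ?thesis
    using rand_pairs_drift_slot[where s = s and n = n and \<delta> = \<delta>, OF A \<alpha> ij Rb hK undecided_ji m0]
    unfolding rnd_def .
next
  case False
  have fit: "2 * ((K - h) div 2) + h \<le> K" using hK by (rule slots_fit)
  have "step_incr K h R AX i j = 0" if "R \<in> set_pmf rnd" for R AX
    unfolding step_incr_def using False rand_pairs_pair_at[OF that[unfolded rnd_def]] fit
      is_list_length[OF Rb]
    by (intro round_incr_no_slot) auto
  then have "(\<integral>\<^sup>+R. ennreal (\<alpha> i * incr_prob K \<alpha> PX h R i j (-1)) \<partial>rnd) = (\<integral>\<^sup>+R. 0 \<partial>rnd)"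
    by (intro nn_integral_cong_AE AE_pmfI) (simp add: incr_prob_def)
  then show ?thesis by simp
qed

lemma br_step_drift:
  fixes t :: nat
  assumes A: "assumptions_A1_A5 K \<alpha> PX" and \<alpha>: "\<And>i. i < K \<Longrightarrow> 0 \<le> \<alpha> i \<and> \<alpha> i \<le> 1"
    and ij: "i < K" "j < K" "i \<noteq> j" "\<alpha> j \<le> \<alpha> i" and Rb: "is_list K Rb"
    and undecided_ji: "undecided \<delta> s n j i"
  defines "Q \<equiv> br_step K \<delta> (env K \<alpha> PX) t (Rb, s, n)"
  shows "\<alpha> i * measure_pmf.prob Q {st'. fst (snd st') i j = s i j - 1}
       \<le> \<alpha> j * measure_pmf.prob Q {st'. fst (snd st') i j = s i j + 1}"
proof -
  define rnd where "rnd = rand_pairs \<delta> (t mod 2) s n Rb ((K - t mod 2) div 2)"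
  have \<alpha>_nonneg: "0 \<le> \<alpha> i" "0 \<le> \<alpha> j" using \<alpha> ij by auto
  have emeasure_Q: "emeasure Q {st'. fst (snd st') i j = s i j + v} =
      (\<integral>\<^sup>+R. ennreal (incr_prob K \<alpha> PX (t mod 2) R i j v) \<partial>rnd)" for v
    unfolding Q_def rnd_def by (rule emeasure_br_step_incr[OF Rb ij(3,1)])
  have "ennreal (\<alpha> i * measure_pmf.prob Q {st'. fst (snd st') i j = s i j - 1}) =
      (\<integral>\<^sup>+R. ennreal (\<alpha> i * incr_prob K \<alpha> PX (t mod 2) R i j (-1)) \<partial>rnd)"
    using emeasure_Q[of "-1"] \<alpha>_nonneg
    by (simp add: measure_pmf.emeasure_eq_measure ennreal_mult nn_integral_cmult incr_prob_nonneg)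
  also have "\<dots> \<le> (\<integral>\<^sup>+R. ennreal (\<alpha> j * incr_prob K \<alpha> PX (t mod 2) R i j 1) \<partial>rnd)"
    unfolding rnd_def by (rule rand_pairs_drift[OF A \<alpha> ij(4) Rb]) (use ij undecided_ji in auto)
  also have "\<dots> = ennreal (\<alpha> j * measure_pmf.prob Q {st'. fst (snd st') i j = s i j + 1})"
    using emeasure_Q[of 1] \<alpha>_nonneg
    by (simp add: measure_pmf.emeasure_eq_measure ennreal_mult nn_integral_cmult incr_prob_nonneg)
  finally show ?thesis using \<alpha>_nonneg by (simp add: ennreal_le_iff)
qed

section \<open>An exponential supermartingale\<close>

lemma Hoeffding_two_point:
  fixes a b l :: real
  assumes "0 < b" "b \<le> a" "0 \<le> l"
  defines "\<mu> \<equiv> (a - b) / (a + b)"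
  shows "a * exp (- l * (1 - \<mu>) - l\<^sup>2 / 2) + b * exp (l * (1 + \<mu>) - l\<^sup>2 / 2) \<le> a + b"
proof -
  define q where "q = b / (a + b)"
  have ab: "0 < a + b" using assms by simp
  have q: "0 \<le> q" "1 - \<mu> = 2 * q" "1 + \<mu> = 2 - 2 * q"
    using assms ab by (simp_all add: q_def \<mu>_def field_simps)
  have "ln (1 + q * (exp (2 * l) - 1)) \<le> 2 * l * q + l\<^sup>2 / 2"
    using Hoeffdings_lemma_aux[of "2 * l" q] assms(3) q(1) by (simp add: power2_eq_square)
  moreover have "0 < 1 + q * (exp (2 * l) - 1)" using q(1) assms(3) by (simp add: add_pos_nonneg)
  ultimately have mgf: "1 + q * (exp (2 * l) - 1) \<le> exp (2 * l * q + l\<^sup>2 / 2)"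
    by (metis exp_le_cancel_iff exp_ln)
  define E where "E = exp (- (2 * l * q + l\<^sup>2 / 2))"
  have "exp (- l * (1 - \<mu>) - l\<^sup>2 / 2) = E"
    unfolding q(2) E_def by (simp add: algebra_simps)
  moreover have "exp (l * (1 + \<mu>) - l\<^sup>2 / 2) = exp (2 * l) * E"
    unfolding q(3) E_def by (subst exp_add[symmetric]) (simp add: algebra_simps)
  ultimately have "a * exp (- l * (1 - \<mu>) - l\<^sup>2 / 2) + b * exp (l * (1 + \<mu>) - l\<^sup>2 / 2)
      = (a + b * exp (2 * l)) * E"
    by (simp add: algebra_simps)
  also have "\<dots> = (a + b) * (1 + q * (exp (2 * l) - 1)) * E"
    using ab by (simp add: q_def field_simps)
  also have "\<dots> \<le> (a + b) * exp (2 * l * q + l\<^sup>2 / 2) * E"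
    using mgf ab by (intro mult_right_mono mult_left_mono) (auto simp: E_def)
  also have "\<dots> = a + b" by (simp add: E_def flip: exp_add)
  finally show ?thesis .
qed

lemma two_point_expectation_le_1:
  fixes a b gp gm Pp Pm P0 :: real
  assumes a: "0 < a" and g: "a * gp + b * gm \<le> a + b" "gp \<le> 1"
    and P: "0 \<le> Pp" "0 \<le> Pm" "a * Pm \<le> b * Pp" "P0 + Pp + Pm \<le> 1"
  shows "gp * Pp + gm * Pm + P0 \<le> 1"
proof (cases "gm \<le> 1")
  case True
  then have "0 \<le> (1 - gp) * Pp" "0 \<le> (1 - gm) * Pm" using g(2) P(1,2) by simp_all
  then show ?thesis using P(4) by (simp add: algebra_simps)
next
  case False
  have "(gm - 1) * (a * Pm) \<le> (gm - 1) * (b * Pp)" using False P(3) by (intro mult_left_mono) auto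
  then have "a * ((gp - 1) * Pp + (gm - 1) * Pm) \<le> Pp * (a * gp + b * gm - a - b)"
    by (simp add: algebra_simps)
  also have "\<dots> \<le> 0" using g(1) P(1) by (intro mult_nonneg_nonpos) auto
  finally have "(gp - 1) * Pp + (gm - 1) * Pm \<le> 0" using a by (simp add: mult_le_0_iff)
  then show ?thesis using P(4) by (simp add: algebra_simps)
qed

(* The exponential supermartingale of the pair (i, j), for \<mu> = (\<alpha> i - \<alpha> j) / (\<alpha> i + \<alpha> j). *)
definition potential :: "real \<Rightarrow> real \<Rightarrow> nat \<Rightarrow> nat \<Rightarrow> state \<Rightarrow> real" where
  "potential l \<mu> i j st = (case st of (_, s, n) \<Rightarrow>
     exp (l * (\<mu> * real (n i j) - real_of_int (s i j)) - l\<^sup>2 / 2 * real (n i j)))"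

lemma potential_pos: "0 < potential l \<mu> i j st"
  by (simp add: potential_def split: prod.split)

definition incr_weight :: "real \<Rightarrow> real \<Rightarrow> int \<Rightarrow> real" where
  "incr_weight l \<mu> d = exp (- l * d + (l * \<mu> - l\<^sup>2 / 2) * \<bar>d\<bar>)"

lemma potential_incr:
  assumes "s' i j = s i j + d" "n' i j = n i j + nat \<bar>d\<bar>"
  shows "potential l \<mu> i j (R', s', n') = potential l \<mu> i j (R, s, n) * incr_weight l \<mu> d"
proof -
  have "real (nat \<bar>d\<bar>) = real_of_int \<bar>d\<bar>" by simp
  then show ?thesis
    unfolding potential_def incr_weight_def using assms by (simp add: algebra_simps flip: exp_add)
qed

lemma br_step_incr_weight:
  fixes t :: nat
  assumes A: "assumptions_A1_A5 K \<alpha> PX" and \<alpha>: "\<And>i. i < K \<Longrightarrow> 0 < \<alpha> i \<and> \<alpha> i \<le> 1"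
    and ij: "i < K" "j < K" "i \<noteq> j" "\<alpha> j \<le> \<alpha> i" and Rb: "is_list K Rb"
    and undecided_ji: "undecided \<delta> s n j i" and l: "0 \<le> l"
  defines "\<mu> \<equiv> (\<alpha> i - \<alpha> j) / (\<alpha> i + \<alpha> j)"
  shows "(\<integral>\<^sup>+st'. ennreal (incr_weight l \<mu> (fst (snd st') i j - s i j))
           \<partial>br_step K \<delta> (env K \<alpha> PX) t (Rb, s, n)) \<le> 1"
proof -
  define Q where "Q = br_step K \<delta> (env K \<alpha> PX) t (Rb, s, n)"
  define S :: "int \<Rightarrow> state set" where "S = (\<lambda>v. {st'. fst (snd st') i j = s i j + v})"
  define gp where "gp = exp (- l * (1 - \<mu>) - l\<^sup>2 / 2)"
  define gm where "gm = exp (l * (1 + \<mu>) - l\<^sup>2 / 2)"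
  have "(\<integral>\<^sup>+st'. ennreal (incr_weight l \<mu> (fst (snd st') i j - s i j)) \<partial>Q) =
      (\<integral>\<^sup>+st'. ennreal gp * indicator (S 1) st' + ennreal gm * indicator (S (-1)) st'
        + indicator (S 0) st' \<partial>Q)"
  proof (intro nn_integral_cong_AE AE_pmfI)
    fix st' assume "st' \<in> set_pmf Q"
    then obtain d where "d \<in> {-1, 0, 1}" "fst (snd st') i j = s i j + d"
      using br_step_stats[OF Rb ij(3,1)] unfolding Q_def by metis
    then show "ennreal (incr_weight l \<mu> (fst (snd st') i j - s i j)) =
        ennreal gp * indicator (S 1) st' + ennreal gm * indicator (S (-1)) st' + indicator (S 0) st'"
      by (auto simp: S_def gp_def gm_def incr_weight_def algebra_simps)
  qed
  also have "\<dots> = ennreal (gp * measure Q (S 1) + gm * measure Q (S (-1)) + measure Q (S 0))"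
    by (simp add: nn_integral_add nn_integral_cmult_indicator measure_pmf.emeasure_eq_measure
        gp_def gm_def flip: ennreal_mult ennreal_plus)
  also have "\<dots> \<le> ennreal 1"
  proof (intro ennreal_leI two_point_expectation_le_1)
    show "0 < \<alpha> i" using \<alpha> ij by simp
    show "\<alpha> i * gp + \<alpha> j * gm \<le> \<alpha> i + \<alpha> j"
      unfolding gp_def gm_def \<mu>_def using \<alpha> ij l by (intro Hoeffding_two_point) auto
    have "\<mu> \<le> 1" using \<alpha>[of i] \<alpha>[of j] ij by (simp add: \<mu>_def divide_le_eq_1)
    then have "0 \<le> l * (1 - \<mu>)" using l by simp
    moreover have "0 \<le> l\<^sup>2" by simp
    ultimately have "- l * (1 - \<mu>) - l\<^sup>2 / 2 \<le> 0" by linarith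
    then show "gp \<le> 1" unfolding gp_def by simp
    show "\<alpha> i * measure Q (S (-1)) \<le> \<alpha> j * measure Q (S 1)"
      using br_step_drift[where s = s and n = n and \<delta> = \<delta> and t = t, OF A _ ij Rb undecided_ji] \<alpha>
      unfolding Q_def S_def by (simp add: less_imp_le)
    have "measure Q (S 0) + measure Q (S 1) + measure Q (S (-1)) = measure Q (S 0 \<union> S 1 \<union> S (-1))"
      by (subst measure_pmf.finite_measure_Union, simp, simp, force simp: S_def)
         (subst measure_pmf.finite_measure_Union, auto simp: S_def)
    then show "measure Q (S 0) + measure Q (S 1) + measure Q (S (-1)) \<le> 1"
      by (metis measure_pmf.prob_le_1)
  qed simp_all
  finally show ?thesis by (simp add: Q_def)
qed

lemma br_step_potential:
  fixes t :: nat
  assumes A: "assumptions_A1_A5 K \<alpha> PX" and \<alpha>: "\<And>i. i < K \<Longrightarrow> 0 < \<alpha> i \<and> \<alpha> i \<le> 1"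
    and ij: "i < K" "j < K" "i \<noteq> j" "\<alpha> j \<le> \<alpha> i" and Rb: "is_list K Rb"
    and undecided_ji: "undecided \<delta> s n j i" and l: "0 \<le> l"
  defines "\<mu> \<equiv> (\<alpha> i - \<alpha> j) / (\<alpha> i + \<alpha> j)"
  shows "(\<integral>\<^sup>+st'. ennreal (potential l \<mu> i j st') \<partial>br_step K \<delta> (env K \<alpha> PX) t (Rb, s, n))
       \<le> ennreal (potential l \<mu> i j (Rb, s, n))"
proof -
  define Q where "Q = br_step K \<delta> (env K \<alpha> PX) t (Rb, s, n)"
  define W where "W = potential l \<mu> i j (Rb, s, n)"
  have W: "0 \<le> W" using potential_pos by (simp add: W_def less_imp_le)
  have "(\<integral>\<^sup>+st'. ennreal (potential l \<mu> i j st') \<partial>Q) =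
      (\<integral>\<^sup>+st'. ennreal W * ennreal (incr_weight l \<mu> (fst (snd st') i j - s i j)) \<partial>Q)"
  proof (intro nn_integral_cong_AE AE_pmfI)
    fix st' assume "st' \<in> set_pmf Q"
    then obtain d where d: "fst (snd st') i j = s i j + d" "snd (snd st') i j = n i j + nat \<bar>d\<bar>"
      using br_step_stats[OF Rb ij(3,1)] unfolding Q_def by metis
    obtain R' s' n' where "st' = (R', s', n')" by (cases st')
    then show "ennreal (potential l \<mu> i j st') =
        ennreal W * ennreal (incr_weight l \<mu> (fst (snd st') i j - s i j))"
      using potential_incr[where R = Rb and R' = R' and l = l and \<mu> = \<mu>, of s' i j s d n' n] d W
      by (simp add: W_def incr_weight_def ennreal_mult)
  qed
  also have "\<dots> = ennreal W * (\<integral>\<^sup>+st'. ennreal (incr_weight l \<mu> (fst (snd st') i j - s i j)) \<partial>Q)"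
    by (simp add: nn_integral_cmult)
  also have "\<dots> \<le> ennreal W * 1"
    using br_step_incr_weight[where s = s and n = n and \<delta> = \<delta>, OF A \<alpha> ij Rb undecided_ji l]
    unfolding Q_def \<mu>_def by (intro mult_left_mono) (simp_all add: zero_le)
  finally show ?thesis by (simp add: Q_def W_def)
qed

section \<open>Trajectories\<close>

definition current_state :: "nat list \<Rightarrow> state list \<Rightarrow> state" where
  "current_state R0 xs = (if xs = [] then init_state R0 else last xs)"

lemma traj_Suc_current_state:
  "traj K \<delta> E R0 (Suc t) = bind_pmf (traj K \<delta> E R0 t)
     (\<lambda>xs. map_pmf (\<lambda>st'. xs @ [st']) (br_step K \<delta> E (Suc t) (current_state R0 xs)))"
  by (simp add: current_state_def)

declare traj.simps(2) [simp del]

lemma length_traj: "xs \<in> set_pmf (traj K \<delta> E R0 T) \<Longrightarrow> length xs = T"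
  by (induction T arbitrary: xs) (auto simp: traj_Suc_current_state)

lemma map_take_traj: "t \<le> T \<Longrightarrow> map_pmf (take t) (traj K \<delta> E R0 T) = traj K \<delta> E R0 t"
proof (induction T)
  case 0
  then show ?case by simp
next
  case (Suc T)
  show ?case
  proof (cases "t = Suc T")
    case True
    have "map_pmf (take t) (traj K \<delta> E R0 (Suc T)) = map_pmf id (traj K \<delta> E R0 (Suc T))"
      by (intro map_pmf_cong) (auto dest: length_traj simp: True)
    then show ?thesis using True by simp
  next
    case False
    then have "t \<le> T" using Suc.prems by simp
    have "map_pmf (take t) (traj K \<delta> E R0 (Suc T)) = bind_pmf (traj K \<delta> E R0 T)
        (\<lambda>xs. map_pmf (\<lambda>st'. take t (xs @ [st'])) (br_step K \<delta> E (Suc T) (current_state R0 xs)))"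
      by (simp add: traj_Suc_current_state map_bind_pmf pmf.map_comp o_def)
    also have "\<dots> = bind_pmf (traj K \<delta> E R0 T) (\<lambda>xs. return_pmf (take t xs))"
      using \<open>t \<le> T\<close> by (intro bind_pmf_cong refl) (simp add: length_traj)
    also have "\<dots> = traj K \<delta> E R0 t"
      using Suc.IH[OF \<open>t \<le> T\<close>] by (simp add: map_pmf_def)
    finally show ?thesis .
  qed
qed

lemma take_in_traj:
  "xs \<in> set_pmf (traj K \<delta> E R0 T) \<Longrightarrow> t \<le> T \<Longrightarrow> take t xs \<in> set_pmf (traj K \<delta> E R0 t)"
  using map_take_traj[of t T K \<delta> E R0] by (metis imageI set_map_pmf)

lemma prob_take_traj:
  "t \<le> T \<Longrightarrow> measure_pmf.prob (traj K \<delta> E R0 T) {xs. take t xs \<in> B} =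
    measure_pmf.prob (traj K \<delta> E R0 t) B"
  by (simp add: vimage_def flip: map_take_traj)

lemma current_state_take_Suc: "t < length xs \<Longrightarrow> current_state R0 (take (Suc t) xs) = xs ! t"
  by (simp add: current_state_def take_Suc_conv_app_nth)

definition consistent_state :: "nat \<Rightarrow> nat \<Rightarrow> state \<Rightarrow> bool" where
  "consistent_state K T st \<longleftrightarrow> (case st of (Rb, s, n) \<Rightarrow> is_list K Rb \<and>
     (\<forall>i<K. \<forall>j<K. i \<noteq> j \<longrightarrow>
        n i j \<le> T \<and> \<bar>s i j\<bar> \<le> int (n i j) \<and> s j i = - s i j \<and> n j i = n i j))"

(* Unfolding consistent_state in simp calls makes the simplifier loop on s j i = - s i j;
   these two rules avoid that. *)
lemma consistent_stateI:
  assumes "is_list K Rb" "\<And>i j. i < K \<Longrightarrow> j < K \<Longrightarrow> i \<noteq> j \<Longrightarrow>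
      n i j \<le> T \<and> \<bar>s i j\<bar> \<le> int (n i j) \<and> s j i = - s i j \<and> n j i = n i j"
  shows "consistent_state K T (Rb, s, n)"
  unfolding consistent_state_def prod.case using assms by blast

lemma consistent_stateD:
  assumes "consistent_state K T (Rb, s, n)"
  shows "is_list K Rb"
    and "i < K \<Longrightarrow> j < K \<Longrightarrow> i \<noteq> j \<Longrightarrow>
      n i j \<le> T \<and> \<bar>s i j\<bar> \<le> int (n i j) \<and> s j i = - s i j \<and> n j i = n i j"
proof -
  have c: "is_list K Rb \<and> (\<forall>i<K. \<forall>j<K. i \<noteq> j \<longrightarrow>
      n i j \<le> T \<and> \<bar>s i j\<bar> \<le> int (n i j) \<and> s j i = - s i j \<and> n j i = n i j)"
    using assms unfolding consistent_state_def prod.case .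
  show "is_list K Rb" using c by (rule conjunct1)
  show "i < K \<Longrightarrow> j < K \<Longrightarrow> i \<noteq> j \<Longrightarrow>
      n i j \<le> T \<and> \<bar>s i j\<bar> \<le> int (n i j) \<and> s j i = - s i j \<and> n j i = n i j"
    by (rule c[THEN conjunct2, rule_format])
qed

lemma consistent_state_traj:
  assumes "is_list K R0"
  shows "ys \<in> set_pmf (traj K \<delta> E R0 T) \<Longrightarrow> consistent_state K T (current_state R0 ys)"
proof (induction T arbitrary: ys)
  case 0
  then show ?case using assms by (simp add: current_state_def init_state_def consistent_state_def)
next
  case (Suc T)
  then obtain xs st' where xs: "xs \<in> set_pmf (traj K \<delta> E R0 T)" "ys = xs @ [st']"
    "st' \<in> set_pmf (br_step K \<delta> E (Suc T) (current_state R0 xs))"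
    by (auto simp: traj_Suc_current_state)
  obtain Rb s n where st: "current_state R0 xs = (Rb, s, n)" by (metis prod_cases3)
  have IH: "consistent_state K T (Rb, s, n)" using Suc.IH[OF xs(1)] st by simp
  then have Rb: "is_list K Rb" by (rule consistent_stateD)
  have mem: "st' \<in> set_pmf (br_step K \<delta> E (Suc T) (Rb, s, n))" using xs(3) st by simp
  obtain R' s' n' where st': "st' = (R', s', n')" by (metis prod_cases3)
  have "current_state R0 ys = (R', s', n')" using xs(2) st' by (simp add: current_state_def)
  moreover have "is_list K R'" using is_list_br_step[OF Rb mem] st' by simp
  moreover have "n' i j \<le> Suc T \<and> \<bar>s' i j\<bar> \<le> int (n' i j) \<and> s' j i = - s' i j \<and> n' j i = n' i j"
    if ij: "i < K" "j < K" "i \<noteq> j" for i j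
  proof -
    obtain d :: int where "d \<in> {-1, 0, 1}"
      "fst (snd st') i j = s i j + d" "fst (snd st') j i = s j i - d"
      "snd (snd st') i j = n i j + nat \<bar>d\<bar>" "snd (snd st') j i = n j i + nat \<bar>d\<bar>"
      by (rule br_step_stats[OF Rb ij(3,1) mem])
    moreover have "n i j \<le> T \<and> \<bar>s i j\<bar> \<le> int (n i j) \<and> s j i = - s i j \<and> n j i = n i j"
      using consistent_stateD(2)[OF IH ij] .
    ultimately show ?thesis unfolding st' by auto
  qed
  ultimately show ?case by (simp only:) (rule consistent_stateI)
qed

definition stopped_value :: "(state \<Rightarrow> real) \<Rightarrow> (state \<Rightarrow> bool) \<Rightarrow> nat list \<Rightarrow> state list \<Rightarrow> real" where
  "stopped_value W G R0 xs =
     (if \<forall>k<length xs. G (current_state R0 (take k xs)) then W (current_state R0 xs) else 0)"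

lemma stopped_value_snoc:
  "stopped_value W G R0 (xs @ [st']) =
    (if (\<forall>k<length xs. G (current_state R0 (take k xs))) \<and> G (current_state R0 xs) then W st' else 0)"
proof -
  have "(\<forall>k<Suc (length xs). G (current_state R0 (take k (xs @ [st'])))) \<longleftrightarrow>
      (\<forall>k<length xs. G (current_state R0 (take k xs))) \<and> G (current_state R0 xs)"
    by (auto simp: less_Suc_eq)
  moreover have "current_state R0 (xs @ [st']) = st'" by (simp add: current_state_def)
  ultimately show ?thesis by (simp only: stopped_value_def length_append_singleton)
qed

lemma nn_integral_stopped_value_le_1:
  assumes R0: "is_list K R0" and W_init: "W (init_state R0) \<le> 1"
    and step: "\<And>t st. is_list K (fst st) \<Longrightarrow> G st \<Longrightarrow>
      (\<integral>\<^sup>+st'. ennreal (W st') \<partial>br_step K \<delta> E t st) \<le> ennreal (W st)"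
  shows "(\<integral>\<^sup>+xs. ennreal (stopped_value W G R0 xs) \<partial>traj K \<delta> E R0 T) \<le> 1"
proof (induction T)
  case 0
  then show ?case using W_init by (simp add: stopped_value_def current_state_def)
next
  case (Suc T)
  have "(\<integral>\<^sup>+xs. ennreal (stopped_value W G R0 xs) \<partial>traj K \<delta> E R0 (Suc T)) =
      (\<integral>\<^sup>+xs. (\<integral>\<^sup>+st'. ennreal (stopped_value W G R0 (xs @ [st']))
        \<partial>br_step K \<delta> E (Suc T) (current_state R0 xs)) \<partial>traj K \<delta> E R0 T)"
    by (simp add: traj_Suc_current_state)
  also have "\<dots> \<le> (\<integral>\<^sup>+xs. ennreal (stopped_value W G R0 xs) \<partial>traj K \<delta> E R0 T)"
  proof (intro nn_integral_mono_AE AE_pmfI)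
    fix xs assume xs: "xs \<in> set_pmf (traj K \<delta> E R0 T)"
    obtain Rb s n where st: "current_state R0 xs = (Rb, s, n)" by (metis prod_cases3)
    have "is_list K (fst (current_state R0 xs))"
      using consistent_state_traj[OF R0 xs] st by (metis consistent_stateD(1) fst_conv)
    show "(\<integral>\<^sup>+st'. ennreal (stopped_value W G R0 (xs @ [st']))
        \<partial>br_step K \<delta> E (Suc T) (current_state R0 xs)) \<le> ennreal (stopped_value W G R0 xs)"
    proof (cases "(\<forall>k<length xs. G (current_state R0 (take k xs))) \<and> G (current_state R0 xs)")
      case True
      then have "stopped_value W G R0 xs = W (current_state R0 xs)" by (simp add: stopped_value_def)
      with True show ?thesis
        using step[OF \<open>is_list K (fst (current_state R0 xs))\<close>] by (simp add: stopped_value_snoc)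
    next
      case False
      then show ?thesis by (simp only: stopped_value_snoc if_not_P[OF False]) simp
    qed
  qed
  also have "\<dots> \<le> 1" by (rule Suc.IH)
  finally show ?case .
qed

lemma Markov_inequality_pmf:
  assumes "\<And>x. x \<in> set_pmf M \<Longrightarrow> x \<in> B \<Longrightarrow> c \<le> f x" "0 < c" "\<And>x. 0 \<le> f x"
    and "(\<integral>\<^sup>+x. ennreal (f x) \<partial>M) \<le> 1"
  shows "measure_pmf.prob M B \<le> 1 / c"
proof -
  have "emeasure M B = (\<integral>\<^sup>+x. indicator B x \<partial>M)" by simp
  also have "\<dots> \<le> (\<integral>\<^sup>+x. ennreal (1 / c) * ennreal (f x) \<partial>M)"
  proof (intro nn_integral_mono_AE AE_pmfI)
    fix x assume "x \<in> set_pmf M"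
    then have "x \<in> B \<Longrightarrow> 1 \<le> 1 / c * f x" using assms(1,2) by (simp add: field_simps)
    then show "indicator B x \<le> ennreal (1 / c) * ennreal (f x)"
      using assms(2,3) by (auto simp: indicator_def simp flip: ennreal_mult)
  qed
  also have "\<dots> = ennreal (1 / c) * (\<integral>\<^sup>+x. ennreal (f x) \<partial>M)" by (simp add: nn_integral_cmult)
  also have "\<dots> \<le> ennreal (1 / c)" using mult_left_mono[OF assms(4), of "ennreal (1 / c)"] by simp
  finally show ?thesis using assms(2) by (simp add: measure_pmf.emeasure_eq_measure)
qed

section \<open>Confidence violations\<close>

definition event_1_pair :: "real \<Rightarrow> (nat \<Rightarrow> real) \<Rightarrow> nat \<Rightarrow> nat \<Rightarrow> state \<Rightarrow> bool" where
  "event_1_pair \<delta> \<alpha> i j st \<longleftrightarrow> (case st of (_, s, n) \<Rightarrow>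
     (\<alpha> i - \<alpha> j) / (\<alpha> i + \<alpha> j) * real (n i j) - thr \<delta> (n i j) \<le> real_of_int (s i j))"

definition event_2_pair :: "real \<Rightarrow> nat \<Rightarrow> nat \<Rightarrow> state \<Rightarrow> bool" where
  "event_2_pair \<delta> i j st \<longleftrightarrow> (case st of (_, s, n) \<Rightarrow> real_of_int (s i j) \<le> thr \<delta> (n i j))"

lemma event_1_iff: "event_1 K \<delta> \<alpha> st \<longleftrightarrow> (\<forall>i j. i < j \<and> j < K \<longrightarrow> event_1_pair \<delta> \<alpha> i j st)"
  by (simp add: event_1_def event_1_pair_def split: prod.split)

lemma event_2_iff: "event_2 K \<delta> st \<longleftrightarrow> (\<forall>i j. j < i \<and> i < K \<longrightarrow> event_2_pair \<delta> i j st)"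
  by (simp add: event_2_def event_2_pair_def split: prod.split)

lemma sqrt_ratio_bound:
  fixes L m X :: real
  assumes "0 < L" "0 < m" "2 * sqrt (m * L) \<le> X"
  shows "L \<le> sqrt (L / m) * X - (sqrt (L / m))\<^sup>2 / 2 * m"
proof -
  have "sqrt (L / m * (m * L)) = sqrt (L / m) * sqrt (m * L)" by (rule real_sqrt_mult)
  then have "sqrt (L / m) * (2 * sqrt (m * L)) = 2 * sqrt (L / m * (m * L))" by simp
  also have "L / m * (m * L) = L\<^sup>2" using assms(2) by (simp add: field_simps power2_eq_square)
  finally have "sqrt (L / m) * (2 * sqrt (m * L)) = 2 * L" using assms(1) by simp
  moreover have "sqrt (L / m) * (2 * sqrt (m * L)) \<le> sqrt (L / m) * X"
    using assms by (intro mult_left_mono) auto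
  ultimately have "2 * L \<le> sqrt (L / m) * X" by simp
  moreover have "(sqrt (L / m))\<^sup>2 / 2 * m = L / 2" using assms by simp
  ultimately show ?thesis using assms(1) by simp
qed

definition unstopped_violation :: "real \<Rightarrow> (nat \<Rightarrow> real) \<Rightarrow> nat list \<Rightarrow> nat \<Rightarrow> nat \<Rightarrow> nat
    \<Rightarrow> state list set" where
  "unstopped_violation \<delta> \<alpha> R0 i j m = {ys. \<not> event_1_pair \<delta> \<alpha> i j (current_state R0 ys) \<and>
     snd (snd (current_state R0 ys)) i j = m \<and>
     (\<forall>k<length ys. event_2_pair \<delta> j i (current_state R0 (take k ys)))}"

lemma prob_unstopped_violation:
  assumes A: "assumptions_A1_A5 K \<alpha> PX" and \<alpha>: "\<And>i. i < K \<Longrightarrow> 0 < \<alpha> i \<and> \<alpha> i \<le> 1"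
    and ij: "i < K" "j < K" "i \<noteq> j" "\<alpha> j \<le> \<alpha> i" and R0: "is_list K R0"
    and \<delta>: "0 < \<delta>" "\<delta> < 1" and m: "0 < m"
  shows "measure_pmf.prob (traj K \<delta> (env K \<alpha> PX) R0 T) (unstopped_violation \<delta> \<alpha> R0 i j m) \<le> \<delta>"
proof -
  define L where "L = ln (1 / \<delta>)"
  define l where "l = sqrt (L / real m)"
  define \<mu> where "\<mu> = (\<alpha> i - \<alpha> j) / (\<alpha> i + \<alpha> j)"
  define V where "V = stopped_value (potential l \<mu> i j) (event_2_pair \<delta> j i) R0"
  have L: "0 < L" unfolding L_def using \<delta> by simp
  have "measure_pmf.prob (traj K \<delta> (env K \<alpha> PX) R0 T) (unstopped_violation \<delta> \<alpha> R0 i j m)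
      \<le> 1 / (1 / \<delta>)"
  proof (rule Markov_inequality_pmf[where f = V])
    show "0 < 1 / \<delta>" using \<delta> by simp
    show "0 \<le> V xs" for xs using potential_pos by (simp add: V_def stopped_value_def less_imp_le)
    show "(\<integral>\<^sup>+xs. ennreal (V xs) \<partial>traj K \<delta> (env K \<alpha> PX) R0 T) \<le> 1"
      unfolding V_def
    proof (rule nn_integral_stopped_value_le_1[OF R0])
      show "potential l \<mu> i j (init_state R0) \<le> 1" by (simp add: potential_def init_state_def)
      fix t st assume "is_list K (fst st)" "event_2_pair \<delta> j i st"
      moreover obtain Rb s n where "st = (Rb, s, n)" by (metis prod_cases3)
      ultimately show "(\<integral>\<^sup>+st'. ennreal (potential l \<mu> i j st') \<partial>br_step K \<delta> (env K \<alpha> PX) t st)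
          \<le> ennreal (potential l \<mu> i j st)"
        using br_step_potential[where Rb = Rb and s = s and n = n and \<delta> = \<delta> and l = l and t = t,
            OF A \<alpha> ij] L
        by (simp add: event_2_pair_def \<mu>_def l_def)
    qed
    fix ys assume "ys \<in> unstopped_violation \<delta> \<alpha> R0 i j m"
    moreover obtain R s n where st: "current_state R0 ys = (R, s, n)" by (metis prod_cases3)
    ultimately have nm: "n i j = m" and viol: "\<not> event_1_pair \<delta> \<alpha> i j (R, s, n)"
      and V: "V ys = potential l \<mu> i j (R, s, n)"
      by (simp_all add: unstopped_violation_def V_def stopped_value_def)
    have "2 * sqrt (real m * L) \<le> \<mu> * real m - real_of_int (s i j)"
      using viol nm by (simp add: event_1_pair_def thr_def L_def \<mu>_def)
    then have "L \<le> l * (\<mu> * real m - real_of_int (s i j)) - l\<^sup>2 / 2 * real m"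
      unfolding l_def by (rule sqrt_ratio_bound[OF L, rotated]) (use m in simp)
    then have "exp L \<le> V ys" by (simp add: V potential_def nm)
    then show "1 / \<delta> \<le> V ys" using \<delta> by (simp add: L_def)
  qed
  then show ?thesis by simp
qed

lemma event_2_pair_of_event_1_pair:
  assumes "s j i = - s i j" "n j i = n i j" "\<alpha> j \<le> \<alpha> i" "0 < \<alpha> j"
    and "event_1_pair \<delta> \<alpha> i j (R, s, n)"
  shows "event_2_pair \<delta> j i (R, s, n)"
proof -
  have "0 \<le> (\<alpha> i - \<alpha> j) / (\<alpha> i + \<alpha> j) * real (n i j)" using assms(3,4) by simp
  then show ?thesis using assms(1,2,5) by (simp add: event_1_pair_def event_2_pair_def)
qed

lemma event_2_of_event_1:
  assumes "consistent_state K T st" "\<And>i j. i < j \<Longrightarrow> j < K \<Longrightarrow> \<alpha> j \<le> \<alpha> i"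
    and "\<And>i. i < K \<Longrightarrow> 0 < \<alpha> i" and "event_1 K \<delta> \<alpha> st"
  shows "event_2 K \<delta> st"
proof -
  obtain R s n where st: "st = (R, s, n)" by (metis prod_cases3)
  have "event_2_pair \<delta> i j (R, s, n)" if "j < i" "i < K" for i j
  proof (rule event_2_pair_of_event_1_pair)
    show "s i j = - s j i" "n i j = n j i"
      using consistent_stateD(2)[of K T R s n j i] assms(1) st that by simp_all
    show "event_1_pair \<delta> \<alpha> j i (R, s, n)" using assms(4) st that by (simp add: event_1_iff)
  qed (use assms(2,3) that in auto)
  then show ?thesis using st by (simp add: event_2_iff)
qed

lemma violation_cover:
  assumes R0: "is_list K R0" and \<alpha>: "\<And>i j. i < j \<Longrightarrow> j < K \<Longrightarrow> \<alpha> j \<le> \<alpha> i"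
    "\<And>i. i < K \<Longrightarrow> 0 < \<alpha> i"
    and xs: "xs \<in> set_pmf (traj K \<delta> E R0 T)" and t: "t < T"
    and bad: "\<not> (event_1 K \<delta> \<alpha> (xs ! t) \<and> event_2 K \<delta> (xs ! t))"
  obtains i j t1 m where "i < j" "j < K" "t1 \<in> {1..T}" "m \<in> {1..T}"
    "take t1 xs \<in> unstopped_violation \<delta> \<alpha> R0 i j m"
proof -
  define st where "st k = current_state R0 (take k xs)" for k
  have len: "length xs = T" using xs by (rule length_traj)
  have cons: "consistent_state K k (st k)" if "k \<le> T" for k
    unfolding st_def using consistent_state_traj[OF R0 take_in_traj[OF xs that]] .
  have "xs ! t = st (Suc t)" using t len by (simp add: st_def current_state_take_Suc)
  then have "\<not> event_1 K \<delta> \<alpha> (st (Suc t))"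
    using bad event_2_of_event_1[OF cons[of "Suc t"] \<alpha>] t by auto
  then obtain i j where ij: "i < j" "j < K" "\<not> event_1_pair \<delta> \<alpha> i j (st (Suc t))"
    by (auto simp: event_1_iff)
  define t1 where "t1 = (LEAST k. \<not> event_1_pair \<delta> \<alpha> i j (st k))"
  have viol: "\<not> event_1_pair \<delta> \<alpha> i j (st t1)" unfolding t1_def
    by (rule LeastI[where P = "\<lambda>k. \<not> event_1_pair \<delta> \<alpha> i j (st k)", OF ij(3)])
  have "t1 \<le> Suc t" unfolding t1_def
    by (rule Least_le[where P = "\<lambda>k. \<not> event_1_pair \<delta> \<alpha> i j (st k)", OF ij(3)])
  have before: "event_1_pair \<delta> \<alpha> i j (st k)" if "k < t1" for k
    using not_less_Least[OF that[unfolded t1_def]] by blast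
  have t1: "t1 \<le> T" using \<open>t1 \<le> Suc t\<close> t by simp
  have ij': "i < K" "i \<noteq> j" using ij by simp_all
  obtain R s n where st_t1: "st t1 = (R, s, n)" by (metis prod_cases3)
  have "n i j \<le> t1 \<and> \<bar>s i j\<bar> \<le> int (n i j) \<and> s j i = - s i j \<and> n j i = n i j"
    using consistent_stateD(2)[OF cons[OF t1, unfolded st_t1] ij'(1) ij(2) ij'(2)] .
  moreover have "n i j \<noteq> 0"
  proof
    assume "n i j = 0"
    with calculation have "s i j = 0" by simp
    with \<open>n i j = 0\<close> viol st_t1 show False by (simp add: event_1_pair_def thr_def)
  qed
  moreover have "t1 \<noteq> 0"
    using viol by (auto simp: st_def current_state_def init_state_def event_1_pair_def thr_def)
  moreover have "event_2_pair \<delta> j i (current_state R0 (take k (take t1 xs)))" if "k < t1" for k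
  proof -
    obtain R' s' n' where st_k: "st k = (R', s', n')" by (metis prod_cases3)
    have "k \<le> T" using that t1 by simp
    then have "s' j i = - s' i j \<and> n' j i = n' i j"
      using consistent_stateD(2)[OF cons[of k, unfolded st_k] ij'(1) ij(2) ij'(2)] by simp
    then have "event_2_pair \<delta> j i (st k)"
      using event_2_pair_of_event_1_pair[of s' j i n' \<alpha> \<delta> R'] before[OF that] st_k \<alpha> ij by simp
    then show ?thesis using that by (simp add: st_def min_def)
  qed
  ultimately show ?thesis
    using that[of i j t1 "n i j"] ij viol st_t1 t1 len
    by (simp add: unstopped_violation_def st_def)
qed

lemma prob_confidence_violation:
  assumes A: "assumptions_A1_A5 K \<alpha> PX" and \<alpha>: "\<And>i. i < K \<Longrightarrow> 0 < \<alpha> i \<and> \<alpha> i \<le> 1"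
    and \<alpha>_mono: "\<And>i j. i < j \<Longrightarrow> j < K \<Longrightarrow> \<alpha> j \<le> \<alpha> i"
    and R0: "is_list K R0" and \<delta>: "0 < \<delta>" "\<delta> < 1"
  shows "measure_pmf.prob (traj K \<delta> (env K \<alpha> PX) R0 T)
           {xs. \<exists>t < length xs. \<not> (event_1 K \<delta> \<alpha> (xs ! t) \<and> event_2 K \<delta> (xs ! t))}
         \<le> real K ^ 2 * real T ^ 2 * \<delta>"
proof -
  define M where "M = traj K \<delta> (env K \<alpha> PX) R0 T"
  define Bad where "Bad = {xs. \<exists>t < length xs. \<not> (event_1 K \<delta> \<alpha> (xs ! t) \<and> event_2 K \<delta> (xs ! t))}"
  define Pairs where "Pairs = {(i, j). i < j \<and> j < K}"
  define I where "I = Pairs \<times> {1..T} \<times> {1..T}"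
  define C :: "(nat \<times> nat) \<times> nat \<times> nat \<Rightarrow> state list set" where
    "C = (\<lambda>((i, j), t1, m). {xs. take t1 xs \<in> unstopped_violation \<delta> \<alpha> R0 i j m})"
  have Pairs: "Pairs \<subseteq> {..<K} \<times> {..<K}" by (auto simp: Pairs_def)
  then have "finite I" unfolding I_def by (auto intro: finite_subset)
  have "card Pairs \<le> K * K" using card_mono[OF _ Pairs] by (simp add: card_cartesian_product)
  then have card_I: "card I \<le> K * K * (T * T)" by (simp add: I_def card_cartesian_product)
  have "Bad \<inter> set_pmf M \<subseteq> (\<Union>idx\<in>I. C idx)"
  proof
    fix xs assume "xs \<in> Bad \<inter> set_pmf M"
    then obtain t where xs: "xs \<in> set_pmf M" and t: "t < T"
      and bad: "\<not> (event_1 K \<delta> \<alpha> (xs ! t) \<and> event_2 K \<delta> (xs ! t))"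
      using length_traj unfolding Bad_def M_def by blast
    have \<alpha>_pos: "\<And>i. i < K \<Longrightarrow> 0 < \<alpha> i" using \<alpha> by blast
    obtain i j t1 m where "i < j" "j < K" "t1 \<in> {1..T}" "m \<in> {1..T}"
      "take t1 xs \<in> unstopped_violation \<delta> \<alpha> R0 i j m"
      by (rule violation_cover[OF R0 \<alpha>_mono \<alpha>_pos xs[unfolded M_def] t bad])
    then show "xs \<in> (\<Union>idx\<in>I. C idx)"
      by (intro UN_I[of "((i, j), t1, m)"]) (auto simp: I_def C_def Pairs_def)
  qed
  then have "measure_pmf.prob M Bad \<le> measure_pmf.prob M (\<Union>idx\<in>I. C idx)"
    by (subst measure_Int_set_pmf[symmetric]) (rule measure_pmf.finite_measure_mono, auto)
  also have "\<dots> \<le> (\<Sum>idx\<in>I. measure_pmf.prob M (C idx))"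
    by (rule measure_pmf.finite_measure_subadditive_finite) (auto simp: \<open>finite I\<close>)
  also have "\<dots> \<le> (\<Sum>idx\<in>I. \<delta>)"
  proof (rule sum_mono)
    fix idx assume "idx \<in> I"
    then obtain i j t1 m where idx: "idx = ((i, j), t1, m)" "i < j" "j < K" "t1 \<le> T" "0 < m"
      unfolding I_def Pairs_def by auto
    then have "measure_pmf.prob M (C idx) =
        measure_pmf.prob (traj K \<delta> (env K \<alpha> PX) R0 t1) (unstopped_violation \<delta> \<alpha> R0 i j m)"
      by (simp add: C_def M_def prob_take_traj)
    also have "\<dots> \<le> \<delta>" using idx \<alpha> \<alpha>_mono \<delta>
      by (intro prob_unstopped_violation[OF A \<alpha> _ _ _ _ R0]) auto
    finally show "measure_pmf.prob M (C idx) \<le> \<delta>" .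
  qed
  also have "\<dots> \<le> real (K * K * (T * T)) * \<delta>"
    using card_I \<delta> by (simp add: mult_right_mono del: of_nat_mult)
  also have "\<dots> = real K ^ 2 * real T ^ 2 * \<delta>" by (simp add: power2_eq_square)
  finally show ?thesis unfolding M_def Bad_def .
qed

lemma min_le_sqrt_bound:
  fixes p \<delta> k x :: real
  assumes "p \<le> 1" "p \<le> k * x\<^sup>2 * \<delta>" "0 < \<delta>" "k = 0 \<or> 1 \<le> k" "0 \<le> x"
  shows "p \<le> sqrt \<delta> * k * x"
proof (cases "sqrt \<delta> * x \<le> 1")
  case True
  have "k * x\<^sup>2 * \<delta> = (sqrt \<delta> * k * x) * (sqrt \<delta> * x)"
    using assms(3) by (simp add: power2_eq_square algebra_simps)
  also have "\<dots> \<le> sqrt \<delta> * k * x"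
    using True assms(3-5) by (intro mult_left_le) auto
  finally show ?thesis using assms(2) by simp
next
  case False
  consider "k = 0" | "1 \<le> k" using assms(4) by blast
  then show ?thesis
  proof cases
    case 1
    then show ?thesis using assms(2) by simp
  next
    case 2
    have "sqrt \<delta> * x * 1 \<le> sqrt \<delta> * x * k" using 2 False by (intro mult_left_mono) auto
    then show ?thesis using False assms(1) by (simp add: mult_ac)
  qed
qed

theorem lemma8:
  fixes K n :: nat and \<delta> :: real and \<alpha> :: "nat \<Rightarrow> real"
    and PX :: "(nat list \<Rightarrow> nat \<Rightarrow> bool) pmf" and R0 :: "nat list"
  assumes "0 < \<delta>" "\<delta> < 1"
    and "\<And>i j. i < j \<Longrightarrow> j < K \<Longrightarrow> \<alpha> j < \<alpha> i"
    and "\<And>i. i < K \<Longrightarrow> 0 < \<alpha> i \<and> \<alpha> i \<le> 1"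
    and "assumptions_A1_A5 K \<alpha> PX"
    and "is_list K R0"
  shows "measure_pmf.prob (traj K \<delta> (env K \<alpha> PX) R0 n)
           {xs. \<exists>t < length xs. \<not> (event_1 K \<delta> \<alpha> (xs ! t) \<and> event_2 K \<delta> (xs ! t))}
         \<le> sqrt \<delta> * real K ^ 2 * real n"
proof (rule min_le_sqrt_bound)
  show "measure_pmf.prob (traj K \<delta> (env K \<alpha> PX) R0 n)
      {xs. \<exists>t < length xs. \<not> (event_1 K \<delta> \<alpha> (xs ! t) \<and> event_2 K \<delta> (xs ! t))}
    \<le> real K ^ 2 * (real n)\<^sup>2 * \<delta>"
    using assms by (intro prob_confidence_violation) (auto intro: less_imp_le)
  show "real K ^ 2 = 0 \<or> 1 \<le> real K ^ 2" by (cases K) auto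
qed (use assms(1) in auto)

end
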